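(* Let $k\in\{1,\dots,n\}$ and let $R$ be a $k$-return of an $n$-DPDA. Then $\mathsf{pop}^k(\mathrm{top}^k(R(0)))\cong\mathrm{top}^k(R(|R|))$, and for every $0$-stack $s^0$ in $\mathrm{top}^k(R(|R|))$, $\mathrm{hist}(R,s^0)$ is the $0$-stack at the corresponding location in $\mathsf{pop}^k(\mathrm{top}^k(R(0)))$.
   Context: Stacks: fix order $n\ge1$, finite stack alphabet $\Gamma$. A $0$-stack is $(\gamma,x)$ with $\gamma\in\Gamma$, $x=(x_n,\dots,x_1)$ a vector of $n$ positive integers (position). For $k\in\{1,\dots,n\}$ a $k$-stack is a finite list $[s_1,\dots,s_m]$ ($m\ge0$) of nonempty $(k-1)$-stacks such that for some $x_n,\dots,x_{k+1}$, every position in $s_i$ has the form $(x_n,\dots,x_{k+1},i,y_{k-1},\dots,y_1)$. The top is at the right; $s^k:s^{k-1}$ appends at the top (right-associative); for $s^r=t^r:t^{r-1}:\dots:t^k$, $\mathrm{top}^k(s^r)=t^k$. Equality of stacks includes positions. $\mathrm{pos}{\downarrow}(s)$ deletes all positions; $s\cong t$ iff $\mathrm{pos}{\downarrow}(s)=\mathrm{pos}{\downarrow}(t)$. For $k<n$, $\mathsf p_{+1}(s^k)$ adds $1$ to the $(n-k)$-th coordinate of all positions. Operations of order $k\ge1$: $\mathsf{pop}^k(s^r:\dots:s^k:s^{k-1})=s^r:\dots:s^k$, defined only if the topmost $k$-stack has at least two $(k-1)$-stacks; $\mathsf{push}^k_\gamma(s^r:\dots:s^0)=s^r:\dots:s^{k+1}:(s^k:\dots:s^0):\mathsf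 p_{+1}(s^{k-1}:\dots:s^1:(\gamma,x))$ where $s^0=(\gamma',x)$. An $n$-DPDA has transitions determined by state and topmost stack symbol, each either $\mathrm{read}(\vec q)$ ($\vec q:A\to Q$ injective; leads to $(\vec q(a),s)$, reading $a$) or $(q,op)$ with $op$ a stack operation of order $\le n$ (leads to $(q,op(s))$ if defined). Configurations are (state, nonempty $n$-stack). A run is a finite sequence $R=c_0,\dots,c_m$ with each $c_i$ a successor of $c_{i-1}$; $R(i)=c_i$, $|R|=m$, $R[i,j]=c_i,\dots,c_j$. $\mathrm{top}^k(c)$, $\mathsf{pop}^k(c)$ refer to the stack of $c$. History: for a run $R$ and a $0$-stack $s^0$ of $R(|R|)$, $\mathrm{hist}(R,s^0)$ is a $0$-stack of $R(0)$: if $|R|=0$ it is $s^0$; if $R=S\circ T$, $|T|=1$, and the last step is a read or a $\mathsf{pop}$, or a $\mathsf{push}^r_\gamma$ with $s^0$ not in the topmost $(r-1)$-stack of $R(|R|)$, it is $\mathrm{hist}(S,s^0)$; if the last step is $\mathsf{push}^r_\gamma$ and $s^0$ is in the topmost $(r-1)$-stack of $R(|R|)$, it is $\mathrm{hist}(S,t^0)$ with $t^0$ equal to $s^0$ with the $(n-r+1)$-th position coordinate decreased by $1$. For a $k$-stack $s^k$ of $R(|R|)$, $k\ge1$, $\mathrm{hist}(R,s^k)$ is the $k$-stack of $R(0)$ containing $\mathrm{hist}(R,s^0)$ for all $0$-stacks $s^0$ of $s^k$. For $k\in\{0,\dots,n\}$, $R$ is $k$-upper if $\mathrm{hist}(R,\mathrm{top}^k(R(|R|)))=\mathrm{top}^k(R(0))$.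 For $k\in\{1,\dots,n\}$, $R$ is a $k$-return if $\mathrm{hist}(R,\mathrm{top}^{k-1}(R(|R|)))=\mathrm{top}^{k-1}(\mathsf{pop}^k(R(0)))$ and $R[i,|R|]$ is not $(k-1)$-upper for every $i\in\{0,\dots,|R|-1\}$. *)

theory Defs
  imports Main
begin

(* A 0-stack is  Zst gamma x  where x = [x_n, ..., x_1] is the
   position (list of length n; 0-based list index j holds coordinate x_(n-j), i.e. the
   (j+1)-th coordinate).  A k-stack (k >= 1) is  Lst [s_1, ..., s_m], top at the right. *)
datatype 'g stk = Zst 'g "nat list" | Lst "'g stk list"

(* well-formedness: wfst n j p s  -- s is a j-stack (for stacks of order n) all of whose
   positions start with the prefix p = [x_n, ..., x_(j+1)] *)
fun wfst :: "nat \<Rightarrow> nat \<Rightarrow> nat list \<Rightarrow> 'g stk \<Rightarrow> bool" where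
  "wfst n 0 p (Zst g x) = (x = p)"
| "wfst n (Suc j) p (Lst ss) =
     (\<forall>i<length ss. ss ! i \<noteq> Lst [] \<and> wfst n j (p @ [Suc i]) (ss ! i))"
| "wfst n _ _ _ = False"

definition nstack :: "nat \<Rightarrow> 'g stk \<Rightarrow> bool" where
  "nstack n s = (wfst n n [] s \<and> s \<noteq> Lst [])"

fun zeros :: "'g stk \<Rightarrow> 'g stk set" where
  "zeros (Zst g x) = {Zst g x}"
| "zeros (Lst ss) = (\<Union>s\<in>set ss. zeros s)"

fun zpos :: "'g stk \<Rightarrow> nat list" where
  "zpos (Zst g x) = x"
| "zpos (Lst ss) = []"

definition positions :: "'g stk \<Rightarrow> nat list set" where
  "positions s = zpos ` zeros s"

fun posdown :: "'g stk \<Rightarrow> 'g stk" where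
  "posdown (Zst g x) = Zst g []"
| "posdown (Lst ss) = Lst (map posdown ss)"

fun map_pos :: "(nat list \<Rightarrow> nat list) \<Rightarrow> 'g stk \<Rightarrow> 'g stk" where
  "map_pos f (Zst g x) = Zst g (f x)"
| "map_pos f (Lst ss) = Lst (map (map_pos f) ss)"

(* substack at a location (list of 0-based indices, outermost first) *)
fun at_path :: "'g stk \<Rightarrow> nat list \<Rightarrow> 'g stk option" where
  "at_path s [] = Some s"
| "at_path (Lst ss) (i # is) = (if i < length ss then at_path (ss ! i) is else None)"
| "at_path (Zst g x) (i # is) = None"

fun top_st :: "nat \<Rightarrow> nat \<Rightarrow> 'g stk \<Rightarrow> 'g stk" where
  "top_st 0 k s = s"
| "top_st (Suc m) k (Zst g x) = Zst g x"
| "top_st (Suc m) k (Lst ss) = (if Suc m \<le> k then Lst ss else top_st m k (last ss))"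

fun upd_top :: "nat \<Rightarrow> nat \<Rightarrow> ('g stk \<Rightarrow> 'g stk) \<Rightarrow> 'g stk \<Rightarrow> 'g stk" where
  "upd_top 0 k f s = f s"
| "upd_top (Suc m) k f (Zst g x) = Zst g x"
| "upd_top (Suc m) k f (Lst ss) =
     (if Suc m \<le> k then f (Lst ss) else Lst (butlast ss @ [upd_top m k f (last ss)]))"

definition pop_st :: "nat \<Rightarrow> nat \<Rightarrow> 'g stk \<Rightarrow> 'g stk option" where
  "pop_st m k s = (case top_st m k s of
      Lst ss \<Rightarrow> if 2 \<le> length ss then Some (upd_top m k (\<lambda>_. Lst (butlast ss)) s) else None
    | Zst g x \<Rightarrow> None)"

definition set_top_sym :: "nat \<Rightarrow> 'g \<Rightarrow> 'g stk \<Rightarrow> 'g stk" where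
  "set_top_sym m \<gamma> s = upd_top m 0 (\<lambda>t. case t of Zst g x \<Rightarrow> Zst \<gamma> x | Lst ss \<Rightarrow> Lst ss) s"

(* push^k_gamma applied to an n-stack; p_{+1} on the copied (k-1)-stack adds 1 to the
   (n-k+1)-th coordinate, i.e. list index n-k *)
definition push_st :: "nat \<Rightarrow> nat \<Rightarrow> 'g \<Rightarrow> 'g stk \<Rightarrow> 'g stk" where
  "push_st n k \<gamma> s = upd_top n k (\<lambda>t. case t of
       Lst ss \<Rightarrow> Lst (ss @ [map_pos (\<lambda>x. x[n - k := Suc (x ! (n - k))])
                                  (set_top_sym (k - 1) \<gamma> (last ss))])
     | Zst g x \<Rightarrow> Zst g x) s"

datatype 'g stack_op = Pop nat | Push nat 'g

datatype ('q, 'a, 'g) trans = Read "'a \<Rightarrow> 'q" | Op 'q "'g stack_op"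

fun apply_op :: "nat \<Rightarrow> 'g stack_op \<Rightarrow> 'g stk \<Rightarrow> 'g stk option" where
  "apply_op n (Pop k) s = pop_st n k s"
| "apply_op n (Push k \<gamma>) s = Some (push_st n k \<gamma> s)"

definition dpda :: "nat \<Rightarrow> ('q \<Rightarrow> 'g \<Rightarrow> ('q, 'a, 'g) trans) \<Rightarrow> bool" where
  "dpda n \<delta> = (\<forall>q g. case \<delta> q g of
       Read f \<Rightarrow> inj f
     | Op p (Pop r) \<Rightarrow> 1 \<le> r \<and> r \<le> n
     | Op p (Push r \<gamma>) \<Rightarrow> 1 \<le> r \<and> r \<le> n)"

definition top_sym :: "nat \<Rightarrow> 'g stk \<Rightarrow> 'g" where
  "top_sym n s = (case top_st n 0 s of Zst g x \<Rightarrow> g | Lst ss \<Rightarrow> undefined)"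

type_synonym ('q, 'g) config = "'q \<times> 'g stk"

definition step :: "nat \<Rightarrow> ('q \<Rightarrow> 'g \<Rightarrow> ('q, 'a, 'g) trans) \<Rightarrow> ('q, 'g) config \<Rightarrow> ('q, 'g) config \<Rightarrow> bool" where
  "step n \<delta> c c' = (case \<delta> (fst c) (top_sym n (snd c)) of
       Read f \<Rightarrow> snd c' = snd c \<and> (\<exists>a. fst c' = f a)
     | Op p op \<Rightarrow> fst c' = p \<and> apply_op n op (snd c) = Some (snd c'))"

(* a run R = c_0, ..., c_m is a nonempty list of configurations; |R| = length R - 1 *)
definition is_run :: "nat \<Rightarrow> ('q \<Rightarrow> 'g \<Rightarrow> ('q, 'a, 'g) trans) \<Rightarrow> ('q, 'g) config list \<Rightarrow> bool" where
  "is_run n \<delta> R = (R \<noteq> [] \<and> (\<forall>c\<in>set R. nstack n (snd c)) \<and>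
      (\<forall>i. Suc i < length R \<longrightarrow> step n \<delta> (R ! i) (R ! Suc i)))"

definition back_pos :: "nat \<Rightarrow> ('q \<Rightarrow> 'g \<Rightarrow> ('q, 'a, 'g) trans) \<Rightarrow> ('q, 'g) config \<Rightarrow> ('q, 'g) config
    \<Rightarrow> nat list \<Rightarrow> nat list" where
  "back_pos n \<delta> c c' x = (case \<delta> (fst c) (top_sym n (snd c)) of
       Op p (Push r \<gamma>) \<Rightarrow>
         (if x \<in> positions (top_st n (r - 1) (snd c')) then x[n - r := x ! (n - r) - 1] else x)
     | _ \<Rightarrow> x)"

fun hpos :: "nat \<Rightarrow> ('q \<Rightarrow> 'g \<Rightarrow> ('q, 'a, 'g) trans) \<Rightarrow> ('q, 'g) config list \<Rightarrow> nat \<Rightarrow> nat list \<Rightarrow> nat list" where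
  "hpos n \<delta> R 0 x = x"
| "hpos n \<delta> R (Suc i) x = hpos n \<delta> R i (back_pos n \<delta> (R ! i) (R ! Suc i) x)"

definition hist :: "nat \<Rightarrow> ('q \<Rightarrow> 'g \<Rightarrow> ('q, 'a, 'g) trans) \<Rightarrow> ('q, 'g) config list \<Rightarrow> 'g stk \<Rightarrow> 'g stk" where
  "hist n \<delta> R z = (THE t. t \<in> zeros (snd (hd R)) \<and> zpos t = hpos n \<delta> R (length R - 1) (zpos z))"

(* R is j-upper: hist(R, top^j(R(|R|))) = top^j(R(0)), i.e. top^j(R(0)) is the j-stack of
   R(0) containing the histories of all 0-stacks of top^j(R(|R|)) *)
definition upper :: "nat \<Rightarrow> ('q \<Rightarrow> 'g \<Rightarrow> ('q, 'a, 'g) trans) \<Rightarrow> ('q, 'g) config list \<Rightarrow> nat \<Rightarrow> bool" where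
  "upper n \<delta> R j = (\<forall>z\<in>zeros (top_st n j (snd (last R))).
       hist n \<delta> R z \<in> zeros (top_st n j (snd (hd R))))"

definition is_return :: "nat \<Rightarrow> ('q \<Rightarrow> 'g \<Rightarrow> ('q, 'a, 'g) trans) \<Rightarrow> nat \<Rightarrow> ('q, 'g) config list \<Rightarrow> bool" where
  "is_return n \<delta> k R = ((\<exists>P. pop_st n k (snd (hd R)) = Some P \<and>
       (\<forall>z\<in>zeros (top_st n (k - 1) (snd (last R))).
          hist n \<delta> R z \<in> zeros (top_st n (k - 1) P))) \<and>
     (\<forall>i < length R - 1. \<not> upper n \<delta> (drop i R) (k - 1)))"

end

theory Submission
  imports Defs
begin

text \<open>Let \<open>\<beta>\<close> be the address of \<open>top\<^sup>k(R(|R|))\<close> and \<open>d\<close> the index of its topmost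
  \<open>(k-1)\<close>-stack. Going backwards along the run we show that the children \<open>1, \<dots>, d\<close> of the node
  \<open>\<beta>\<close> were, in every earlier configuration, the children \<open>1, \<dots>, d\<close> of some node \<open>\<beta>\<^sub>0\<close>,
  with the history map sending each 0-stack to its counterpart. A single step changes only its
  topmost \<open>(r-1)\<close>-stack. Since no proper suffix of a return is \<open>(k-1)\<close>-upper, some 0-stack of
  the traced children has its history outside the topmost \<open>(k-1)\<close>-stack; as the topmost
  0-stack is the lexicographically greatest position, this rules out that a pop, or a push of
  order at most \<open>k\<close>, touches the traced children, while a push of higher order can only shift
  all of them together to a fresh copy. At \<open>R(0)\<close>, the return condition puts the history of
  the topmost 0-stack into the topmost \<open>(k-1)\<close>-stack of \<open>pop\<^sup>k(R(0))\<close>, which identifies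
  \<open>\<beta>\<^sub>0\<close> with the address of \<open>top\<^sup>k(R(0))\<close> and \<open>d + 1\<close> with its length. Hence
  \<open>top\<^sup>k(R(|R|))\<close> and \<open>pop\<^sup>k(top\<^sup>k(R(0)))\<close> have the same symbols at the same paths.\<close>

section \<open>Well-formed stacks and positions\<close>

lemma mem_zeros_Zst: "z \<in> zeros s \<Longrightarrow> \<exists>g x. z = Zst g x"
  by (induction s) auto

lemma Zst_mem_zeros_Lst_iff: "Zst g x \<in> zeros (Lst ss) \<longleftrightarrow> (\<exists>i<length ss. Zst g x \<in> zeros (ss ! i))"
  by (auto simp: in_set_conv_nth) (metis nth_mem)

lemma wfst_0D: "wfst n 0 p s \<Longrightarrow> \<exists>g. s = Zst g p"
  by (cases s) auto

lemma wfst_SucD: "wfst n (Suc j) p s \<Longrightarrow> \<exists>ss. s = Lst ss"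
  by (cases s) auto

lemma wfst_zeros_pos:
  "wfst n j p s \<Longrightarrow> Zst g x \<in> zeros s \<Longrightarrow> length x = length p + j \<and> take (length p) x = p"
proof (induction j arbitrary: p s)
  case 0
  then show ?case by (cases s) auto
next
  case (Suc j)
  then obtain ss i where s: "s = Lst ss" and i: "i < length ss" "Zst g x \<in> zeros (ss ! i)"
    by (metis wfst_SucD Zst_mem_zeros_Lst_iff)
  with Suc.prems have "wfst n j (p @ [Suc i]) (ss ! i)" by auto
  from Suc.IH[OF this i(2)]
  have "length x = length p + Suc j" "take (Suc (length p)) x = p @ [Suc i]" by auto
  moreover have "take (length p) x = take (length p) (take (Suc (length p)) x)" by simp
  ultimately show ?case by simp
qed

lemma wfst_child_pos:
  assumes "wfst n (Suc j) p (Lst ss)" "i < length ss" "Zst g x \<in> zeros (ss ! i)"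
  shows "length x = length p + Suc j" "take (Suc (length p)) x = p @ [Suc i]" "x ! length p = Suc i"
proof -
  from assms have "wfst n j (p @ [Suc i]) (ss ! i)" by simp
  from wfst_zeros_pos[OF this assms(3)]
  show len: "length x = length p + Suc j" and tk: "take (Suc (length p)) x = p @ [Suc i]" by auto
  from tk len show "x ! length p = Suc i" by (metis nth_append_length nth_take lessI)
qed

lemma wfst_zeros_unique:
  "wfst n j p s \<Longrightarrow> Zst g x \<in> zeros s \<Longrightarrow> Zst g' x \<in> zeros s \<Longrightarrow> g = g'"
proof (induction j arbitrary: p s)
  case 0
  then show ?case by (cases s) auto
next
  case (Suc j)
  then obtain ss i i' where s: "s = Lst ss"
    and i: "i < length ss" "Zst g x \<in> zeros (ss ! i)"
    and i': "i' < length ss" "Zst g' x \<in> zeros (ss ! i')"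
    by (metis wfst_SucD Zst_mem_zeros_Lst_iff)
  have "i = i'"
    using wfst_child_pos(3)[OF Suc.prems(1)[unfolded s] i] wfst_child_pos(3)[OF Suc.prems(1)[unfolded s] i']
    by simp
  with Suc s i i' show ?case by auto
qed

lemma wfst_Lst_last:
  assumes "wfst n (Suc j) p (Lst ss)" "ss \<noteq> []"
  shows "wfst n j (p @ [length ss]) (last ss)" "last ss \<noteq> Lst []"
proof -
  have "length ss - 1 < length ss" "Suc (length ss - 1) = length ss" using assms(2) by auto
  then show "wfst n j (p @ [length ss]) (last ss)" "last ss \<noteq> Lst []"
    using assms by (metis wfst.simps(2) last_conv_nth)+
qed

lemma top_st_0_mem_zeros:
  "wfst n j p s \<Longrightarrow> s \<noteq> Lst [] \<Longrightarrow> \<exists>g x. top_st j 0 s = Zst g x \<and> Zst g x \<in> zeros s"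
proof (induction j arbitrary: p s)
  case 0
  then show ?case by (cases s) auto
next
  case (Suc j)
  then obtain ss where s: "s = Lst ss" "ss \<noteq> []" using wfst_SucD by blast
  with Suc.IH wfst_Lst_last[OF Suc.prems(1)[unfolded s(1)] s(2)]
  show ?case by (metis last_in_set UN_iff top_st.simps(3) zeros.simps(2) not_less_eq_eq le0)
qed

lemma top_st_self [simp]: "top_st m m s = s"
  by (cases m; cases s) auto

lemma top_st_top_st: "m \<le> r \<Longrightarrow> r \<le> j \<Longrightarrow> top_st r m (top_st j r s) = top_st j m s"
proof (induction j arbitrary: s)
  case 0
  then show ?case by simp
next
  case (Suc j)
  show ?case
  proof (cases s)
    case Zst
    then show ?thesis by (cases r; cases m) auto
  next
    case Lst
    then show ?thesis using Suc by (cases "r = Suc j") auto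
  qed
qed

lemma wfst_top_st:
  assumes "wfst n j p s" "s \<noteq> Lst []" "m \<le> j"
  shows "wfst n m (take (length p + j - m) (zpos (top_st j 0 s))) (top_st j m s) \<and>
    top_st j m s \<noteq> Lst [] \<and> zeros (top_st j m s) \<subseteq> zeros s"
  using assms
proof (induction j arbitrary: p s)
  case 0
  then show ?case by (auto dest: wfst_0D)
next
  case (Suc j)
  then obtain ss where s: "s = Lst ss" "ss \<noteq> []" using wfst_SucD by blast
  note last = wfst_Lst_last[OF Suc.prems(1)[unfolded s(1)] s(2)]
  show ?case
  proof (cases "m = Suc j")
    case True
    obtain g t where "top_st (Suc j) 0 s = Zst g t" "Zst g t \<in> zeros s"
      using top_st_0_mem_zeros Suc.prems by blast
    with wfst_zeros_pos[OF Suc.prems(1)] True Suc.prems show ?thesis by simp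
  next
    case False
    with Suc.prems have m: "m \<le> j" by simp
    have "zeros (last ss) \<subseteq> zeros s" using s by (auto intro: last_in_set)
    with Suc.IH[OF last m] s m show ?thesis by auto
  qed
qed

lemma mem_zeros_top_st_iff:
  assumes "wfst n j p s" "s \<noteq> Lst []" "m \<le> j" "Zst g x \<in> zeros s"
  shows "Zst g x \<in> zeros (top_st j m s) \<longleftrightarrow>
    take (length p + j - m) x = take (length p + j - m) (zpos (top_st j 0 s))"
  using assms
proof (induction j arbitrary: p s)
  case 0
  then show ?case by (auto dest: wfst_0D)
next
  case (Suc j)
  then obtain ss where s: "s = Lst ss" "ss \<noteq> []" using wfst_SucD by blast
  note wf = Suc.prems(1)[unfolded s(1)]
  note last = wfst_Lst_last[OF wf s(2)]
  show ?case
  proof (cases "m = Suc j")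
    case True
    obtain g' t where "top_st (Suc j) 0 s = Zst g' t" "Zst g' t \<in> zeros s"
      using top_st_0_mem_zeros Suc.prems by blast
    with wfst_zeros_pos[OF Suc.prems(1)] True Suc.prems show ?thesis by simp
  next
    case False
    with Suc.prems have m: "m \<le> j" by simp
    obtain i where i: "i < length ss" "Zst g x \<in> zeros (ss ! i)"
      using Suc.prems(4) s Zst_mem_zeros_Lst_iff by metis
    obtain g' t where t: "top_st j 0 (last ss) = Zst g' t" "Zst g' t \<in> zeros (last ss)"
      using top_st_0_mem_zeros last by blast
    have last_idx: "length ss - 1 < length ss" "ss ! (length ss - 1) = last ss"
      using s(2) by (auto simp: last_conv_nth)
    have t_pos: "length t = length p + Suc j" "t ! length p = length ss"
      using wfst_child_pos[OF wf last_idx(1)] t(2) last_idx s(2) by auto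
    have x_pos: "length x = length p + Suc j" "x ! length p = Suc i"
      using wfst_child_pos[OF wf i] by auto
    show ?thesis
    proof (cases "i = length ss - 1")
      case True
      with i last_idx have "Zst g x \<in> zeros (last ss)" by simp
      with Suc.IH[OF last m] s m show ?thesis by simp
    next
      case False
      have "take (length p + Suc j - m) x \<noteq> take (length p + Suc j - m) t"
      proof
        assume "take (length p + Suc j - m) x = take (length p + Suc j - m) t"
        moreover have "length p < length p + Suc j - m" using m by simp
        ultimately have "x ! length p = t ! length p" by (metis nth_take)
        with x_pos t_pos False i(1) show False by simp
      qed
      moreover have "Zst g x \<notin> zeros (top_st j m (last ss))"
      proof
        assume "Zst g x \<in> zeros (top_st j m (last ss))"
        then have "Zst g x \<in> zeros (last ss)" using wfst_top_st[OF last m] by blast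
        then have "x ! length p = length ss" using wfst_child_pos[OF wf last_idx(1)] last_idx s(2) by auto
        with False x_pos i show False by simp
      qed
      ultimately show ?thesis using s m t by simp
    qed
  qed
qed

text \<open>The topmost 0-stack is the lexicographically greatest position.\<close>

lemma top_pos_maximal:
  assumes "wfst n j p s" "s \<noteq> Lst []" "Zst g x \<in> zeros s" "l < j"
    "take (length p + l) x = take (length p + l) (zpos (top_st j 0 s))"
  shows "x ! (length p + l) \<le> zpos (top_st j 0 s) ! (length p + l)"
  using assms
proof (induction j arbitrary: p s l)
  case 0
  then show ?case by simp
next
  case (Suc j)
  then obtain ss where s: "s = Lst ss" "ss \<noteq> []" using wfst_SucD by blast
  note wf = Suc.prems(1)[unfolded s(1)]
  note last = wfst_Lst_last[OF wf s(2)]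
  obtain i where i: "i < length ss" "Zst g x \<in> zeros (ss ! i)"
    using Suc.prems(3) s Zst_mem_zeros_Lst_iff by metis
  obtain g' t where t: "top_st j 0 (last ss) = Zst g' t" "Zst g' t \<in> zeros (last ss)"
    using top_st_0_mem_zeros last by blast
  have last_idx: "length ss - 1 < length ss" "ss ! (length ss - 1) = last ss"
    using s(2) by (auto simp: last_conv_nth)
  have t_pos: "length t = length p + Suc j" "t ! length p = length ss"
    using wfst_child_pos[OF wf last_idx(1)] t(2) last_idx s(2) by auto
  have x_pos: "length x = length p + Suc j" "x ! length p = Suc i"
    using wfst_child_pos[OF wf i] by auto
  have top: "zpos (top_st (Suc j) 0 s) = t" using s t by simp
  show ?case
  proof (cases l)
    case 0
    then show ?thesis using top t_pos x_pos i by simp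
  next
    case (Suc l')
    have "length p < length p + l" using Suc by simp
    with Suc.prems(5) top have "x ! length p = t ! length p" by (metis nth_take)
    with t_pos x_pos i last_idx have "Zst g x \<in> zeros (last ss)" by (metis diff_Suc_1)
    with Suc.IH[OF last, of l'] Suc.prems(4,5) top Suc t show ?thesis by simp
  qed
qed

lemma zeros_Lst_butlast_last:
  "ss \<noteq> [] \<Longrightarrow> zeros (Lst ss) = zeros (Lst (butlast ss)) \<union> zeros (last ss)"
proof -
  assume "ss \<noteq> []"
  then have "zeros (Lst ss) = zeros (Lst (butlast ss @ [last ss]))" by simp
  also have "\<dots> = zeros (Lst (butlast ss)) \<union> zeros (last ss)" by auto
  finally show ?thesis .
qed

lemma zeros_butlast_last_disjoint:
  assumes "wfst n (Suc j) p (Lst ss)" "ss \<noteq> []"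
  shows "zeros (Lst (butlast ss)) \<inter> zeros (last ss) = {}"
proof (rule ccontr)
  assume "zeros (Lst (butlast ss)) \<inter> zeros (last ss) \<noteq> {}"
  then obtain g x where x: "Zst g x \<in> zeros (Lst (butlast ss))" "Zst g x \<in> zeros (last ss)"
    using mem_zeros_Zst by blast
  from x(1) obtain i where i: "i < length ss - 1" "Zst g x \<in> zeros (ss ! i)"
    using Zst_mem_zeros_Lst_iff[of g x "butlast ss"] by (auto simp: nth_butlast)
  have "x ! length p = Suc i" using wfst_child_pos(3)[OF assms(1), of i] i by simp
  moreover have "x ! length p = length ss"
    using wfst_child_pos(3)[OF assms(1), of "length ss - 1"] x(2) assms(2) by (simp add: last_conv_nth)
  ultimately show False using i by simp
qed

lemma zeros_upd_top:
  "wfst n j p s \<Longrightarrow> s \<noteq> Lst [] \<Longrightarrow> m \<le> j \<Longrightarrow>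
    zeros (upd_top j m f s) = (zeros s - zeros (top_st j m s)) \<union> zeros (f (top_st j m s))"
proof (induction j arbitrary: p s)
  case 0
  then show ?case by simp
next
  case (Suc j)
  then obtain ss where s: "s = Lst ss" "ss \<noteq> []" using wfst_SucD by blast
  note last = wfst_Lst_last[OF Suc.prems(1)[unfolded s(1)] s(2)]
  show ?case
  proof (cases "m = Suc j")
    case True
    then show ?thesis using s by simp
  next
    case False
    then have m: "m \<le> j" using Suc.prems by simp
    have "zeros (upd_top (Suc j) m f s) = zeros (Lst (butlast ss)) \<union> zeros (upd_top j m f (last ss))"
      using s m by auto
    moreover have "zeros s = zeros (Lst (butlast ss)) \<union> zeros (last ss)"
      using s zeros_Lst_butlast_last by simp
    moreover note Suc.IH[OF last m] wfst_top_st[OF last m]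
      zeros_butlast_last_disjoint[OF Suc.prems(1)[unfolded s(1)] s(2)]
    ultimately show ?thesis using s m by auto
  qed
qed

lemma top_st_upd_top:
  "wfst n j p s \<Longrightarrow> s \<noteq> Lst [] \<Longrightarrow> m \<le> j \<Longrightarrow> top_st j m (upd_top j m f s) = f (top_st j m s)"
proof (induction j arbitrary: p s)
  case 0
  then show ?case by simp
next
  case (Suc j)
  then obtain ss where s: "s = Lst ss" "ss \<noteq> []" using wfst_SucD by blast
  with Suc.IH[OF wfst_Lst_last[OF Suc.prems(1)[unfolded s(1)] s(2)]] Suc.prems(3)
  show ?case by (cases "m = Suc j") auto
qed


section \<open>Nonempty \<open>n\<close>-stacks\<close>

definition top_pos :: "nat \<Rightarrow> 'g stk \<Rightarrow> nat list" where
  "top_pos n s = zpos (top_st n 0 s)"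

lemma nstack_top_st:
  "nstack n s \<Longrightarrow> m \<le> n \<Longrightarrow> wfst n m (take (n - m) (top_pos n s)) (top_st n m s) \<and>
    top_st n m s \<noteq> Lst [] \<and> zeros (top_st n m s) \<subseteq> zeros s"
  using wfst_top_st[of n n "[]" s m] unfolding nstack_def top_pos_def by simp

lemma nstack_zeros_top_st_subset: "nstack n s \<Longrightarrow> m \<le> n \<Longrightarrow> zeros (top_st n m s) \<subseteq> zeros s"
  using nstack_top_st by blast

lemma nstack_pos_length: "nstack n s \<Longrightarrow> Zst g x \<in> zeros s \<Longrightarrow> length x = n"
  using wfst_zeros_pos[of n n "[]" s g x] unfolding nstack_def by simp

lemma nstack_top_pos: "nstack n s \<Longrightarrow> \<exists>g. top_st n 0 s = Zst g (top_pos n s) \<and> Zst g (top_pos n s) \<in> zeros s"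
  using top_st_0_mem_zeros[of n n "[]" s] unfolding nstack_def top_pos_def by auto

lemma length_top_pos: "nstack n s \<Longrightarrow> length (top_pos n s) = n"
  using nstack_top_pos[of n s] nstack_pos_length[of n s] by blast

lemma top_pos_split:
  "nstack n s \<Longrightarrow> L < n \<Longrightarrow> top_pos n s = take L (top_pos n s) @ top_pos n s ! L # drop (Suc L) (top_pos n s)"
  using id_take_nth_drop length_top_pos by metis

lemma nstack_mem_zeros_top_st_iff:
  "nstack n s \<Longrightarrow> m \<le> n \<Longrightarrow> Zst g x \<in> zeros s \<Longrightarrow>
    Zst g x \<in> zeros (top_st n m s) \<longleftrightarrow> take (n - m) x = take (n - m) (top_pos n s)"
  using mem_zeros_top_st_iff[of n n "[]" s m g x] unfolding nstack_def top_pos_def by simp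

lemma nstack_top_pos_maximal:
  "nstack n s \<Longrightarrow> Zst g x \<in> zeros s \<Longrightarrow> l < n \<Longrightarrow>
    take l x = take l (top_pos n s) \<Longrightarrow> x ! l \<le> top_pos n s ! l"
  using top_pos_maximal[of n n "[]" s g x l] unfolding nstack_def top_pos_def by simp

lemma nstack_zeros_unique: "nstack n s \<Longrightarrow> Zst g x \<in> zeros s \<Longrightarrow> Zst g' x \<in> zeros s \<Longrightarrow> g = g'"
  using wfst_zeros_unique unfolding nstack_def by metis

lemma top_st_pred:
  assumes "1 \<le> r" "r \<le> n" "top_st n r s = Lst ss"
  shows "top_st n (r - 1) s = last ss"
proof -
  obtain r' where r': "r = Suc r'" using assms(1) by (cases r) auto
  have "top_st n (r - 1) s = top_st r (r - 1) (top_st n r s)" using top_st_top_st[of "r - 1" r n s] assms by simp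
  then show ?thesis using assms(3) r' by simp
qed

lemma zeros_pop_st:
  assumes "nstack n s" "1 \<le> r" "r \<le> n" "pop_st n r s = Some s'"
  shows "zeros s' = zeros s - zeros (top_st n (r - 1) s)"
proof -
  obtain ss where ss: "top_st n r s = Lst ss" "2 \<le> length ss"
    and s': "s' = upd_top n r (\<lambda>_. Lst (butlast ss)) s"
    using assms(4) unfolding pop_st_def by (auto split: stk.splits if_splits)
  obtain r' where r': "r = Suc r'" using assms(2) by (cases r) auto
  have wf: "wfst n (Suc r') (take (n - r) (top_pos n s)) (Lst ss)" and sub: "zeros (Lst ss) \<subseteq> zeros s"
    using nstack_top_st[OF assms(1,3)] ss(1) r' by auto
  have "zeros s' = (zeros s - zeros (Lst ss)) \<union> zeros (Lst (butlast ss))"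
    using zeros_upd_top[of n n "[]" s r] assms(1,3) ss(1) s' unfolding nstack_def by simp
  moreover have ne: "ss \<noteq> []" using ss(2) by auto
  note zeros_Lst_butlast_last[OF ne]
  moreover note zeros_butlast_last_disjoint[OF wf ne]
  ultimately show ?thesis unfolding top_st_pred[OF assms(2,3) ss(1)] using sub by blast
qed

lemma Zst_mem_zeros_map_pos: "Zst g x \<in> zeros (map_pos f u) \<longleftrightarrow> (\<exists>y. x = f y \<and> Zst g y \<in> zeros u)"
  by (induction u) auto

lemma Zst_mem_zeros_set_top_sym:
  assumes "wfst n m q u" "u \<noteq> Lst []"
  shows "Zst g y \<in> zeros (set_top_sym m \<gamma> u) \<longleftrightarrow>
     (\<exists>g0. Zst g0 y \<in> zeros u \<and> g = (if y = zpos (top_st m 0 u) then \<gamma> else g0))"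
proof -
  obtain gt t where t: "top_st m 0 u = Zst gt t" "Zst gt t \<in> zeros u"
    using top_st_0_mem_zeros assms by blast
  have z: "zeros (set_top_sym m \<gamma> u) = (zeros u - {Zst gt t}) \<union> {Zst \<gamma> t}"
    unfolding set_top_sym_def using zeros_upd_top[OF assms, of 0] t by simp
  have "Zst g y \<in> zeros u \<Longrightarrow> y = t \<Longrightarrow> g = gt" using wfst_zeros_unique[OF assms(1) _ t(2)] by blast
  then show ?thesis using z t by auto
qed

definition pos_succ :: "nat \<Rightarrow> nat \<Rightarrow> nat list \<Rightarrow> nat list" where
  "pos_succ n r y = y[n - r := Suc (y ! (n - r))]"

definition pos_pred :: "nat \<Rightarrow> nat \<Rightarrow> nat list \<Rightarrow> nat list" where
  "pos_pred n r y = y[n - r := y ! (n - r) - 1]"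

lemma pos_pred_pos_succ [simp]: "pos_pred n r (pos_succ n r y) = y"
  unfolding pos_pred_def pos_succ_def by (cases "n - r < length y") (auto simp: list_update_beyond)

lemma pos_succ_append: "n - r < length b \<Longrightarrow> pos_succ n r (b @ z) = pos_succ n r b @ z"
  unfolding pos_succ_def by (simp add: list_update_append1 nth_append)

lemma length_pos_succ [simp]: "length (pos_succ n r y) = length y"
  unfolding pos_succ_def by simp

lemma take_pos_succ: "m \<le> n - r \<Longrightarrow> take m (pos_succ n r y) = take m y"
  unfolding pos_succ_def by simp

lemma nth_pos_succ: "n - r < length y \<Longrightarrow> pos_succ n r y ! (n - r) = Suc (y ! (n - r))"
  unfolding pos_succ_def by simp

lemma zeros_push_st:
  assumes "nstack n s" "1 \<le> r" "r \<le> n"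
  shows "zeros (push_st n r \<gamma> s) = zeros s \<union> zeros (top_st n (r - 1) (push_st n r \<gamma> s))"
    and "Zst g x \<in> zeros (top_st n (r - 1) (push_st n r \<gamma> s)) \<longleftrightarrow>
      (\<exists>g0 y. Zst g0 y \<in> zeros (top_st n (r - 1) s) \<and> x = pos_succ n r y \<and>
              g = (if y = top_pos n s then \<gamma> else g0))"
proof -
  obtain r' where r': "r = Suc r'" using assms(2) by (cases r) auto
  have wf_top: "wfst n r (take (n - r) (top_pos n s)) (top_st n r s)" "top_st n r s \<noteq> Lst []"
    "zeros (top_st n r s) \<subseteq> zeros s"
    using nstack_top_st[OF assms(1,3)] by auto
  then obtain ss where ss: "top_st n r s = Lst ss" using wfst_SucD r' by blast
  with wf_top have sub: "zeros (Lst ss) \<subseteq> zeros s" by simp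
  define new where "new = map_pos (pos_succ n r) (set_top_sym (r - 1) \<gamma> (last ss))"
  define F where "F = (\<lambda>t. case t of
       Lst ss \<Rightarrow> Lst (ss @ [map_pos (\<lambda>x. x[n - r := Suc (x ! (n - r))]) (set_top_sym (r - 1) \<gamma> (last ss))])
     | Zst g x \<Rightarrow> Zst g x)"
  have push: "push_st n r \<gamma> s = upd_top n r F s" unfolding push_st_def F_def ..
  have F: "F (Lst ss) = Lst (ss @ [new])" unfolding F_def new_def pos_succ_def by simp
  have top_push: "top_st n r (push_st n r \<gamma> s) = Lst (ss @ [new])"
    using top_st_upd_top[of n n "[]" s r F] assms(1,3) push ss F unfolding nstack_def by simp
  have top_new: "top_st n (r - 1) (push_st n r \<gamma> s) = new"
    using top_st_pred[OF assms(2,3) top_push] by simp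
  have "zeros (push_st n r \<gamma> s) = (zeros s - zeros (Lst ss)) \<union> zeros (Lst (ss @ [new]))"
    using zeros_upd_top[of n n "[]" s r F] assms(1,3) push ss F unfolding nstack_def by simp
  then show "zeros (push_st n r \<gamma> s) = zeros s \<union> zeros (top_st n (r - 1) (push_st n r \<gamma> s))"
    unfolding top_new using sub by auto
  have top_old: "top_st n (r - 1) s = last ss" using top_st_pred[OF assms(2,3) ss(1)] .
  have "r - 1 \<le> n" using assms by simp
  from nstack_top_st[OF assms(1) this] top_old
  have wf: "wfst n (r - 1) (take (n - (r - 1)) (top_pos n s)) (last ss)" "last ss \<noteq> Lst []" by auto
  have top0: "zpos (top_st (r - 1) 0 (last ss)) = top_pos n s"
    using top_st_top_st[of 0 "r - 1" n s] top_old \<open>r - 1 \<le> n\<close> unfolding top_pos_def by simp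
  show "Zst g x \<in> zeros (top_st n (r - 1) (push_st n r \<gamma> s)) \<longleftrightarrow>
      (\<exists>g0 y. Zst g0 y \<in> zeros (top_st n (r - 1) s) \<and> x = pos_succ n r y \<and>
              g = (if y = top_pos n s then \<gamma> else g0))"
    unfolding top_new new_def Zst_mem_zeros_map_pos top_old Zst_mem_zeros_set_top_sym[OF wf] top0 by blast
qed


section \<open>Tracing children of a node through one step\<close>

lemma take_Suc_eq_snocD:
  assumes "take (Suc L) x = b @ [d]" "length b = L" "L < length x"
  shows "take L x = b" "x ! L = d" "x = b @ d # drop (Suc L) x"
proof -
  have "take L x = take L (take (Suc L) x)" by simp
  then show "take L x = b" using assms(1,2) by simp
  show "x ! L = d" using assms by (metis nth_append_length nth_take lessI)
  have "x = take (Suc L) x @ drop (Suc L) x" by simp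
  then show "x = b @ d # drop (Suc L) x" using assms(1) by simp
qed

lemma take_eq_take_le: "take m x = take m y \<Longrightarrow> m' \<le> m \<Longrightarrow> take m' x = take m' y"
  by (metis min.absorb1 take_take)

lemma nstack_mem_zeros_top_pred_iff:
  "nstack n s \<Longrightarrow> 1 \<le> k \<Longrightarrow> k \<le> n \<Longrightarrow> Zst g x \<in> zeros s \<Longrightarrow>
    Zst g x \<in> zeros (top_st n (k - 1) s) \<longleftrightarrow> take (Suc (n - k)) x = take (Suc (n - k)) (top_pos n s)"
  using nstack_mem_zeros_top_st_iff[of n s "k - 1"] by (simp add: Suc_diff_le)

lemma prefix_below_not_top:
  assumes "nstack n s" "Zst g x \<in> zeros s" "L < n" "length \<beta> = L" "take (Suc L) x = \<beta> @ [d]"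
    "take (Suc L) x \<noteq> take (Suc L) (top_pos n s)" "j \<le> d"
  shows "\<beta> @ [j] \<noteq> take (Suc L) (top_pos n s)"
proof
  assume top: "\<beta> @ [j] = take (Suc L) (top_pos n s)"
  have "L < length (top_pos n s)" "L < length x"
    using assms(3) length_top_pos[OF assms(1)] nstack_pos_length[OF assms(1,2)] by auto
  note tp = take_Suc_eq_snocD[OF top[symmetric] assms(4) this(1)]
    and xp = take_Suc_eq_snocD[OF assms(5,4) this(2)]
  have "d \<le> j" using nstack_top_pos_maximal[OF assms(1-3)] tp xp by simp
  with assms(5-7) top show False by simp
qed

lemma prefix_not_above_top:
  assumes "nstack n s" "Zst g x \<in> zeros s" "L < n" "length \<beta> = L" "take (Suc L) x = \<beta> @ [d]" "j \<le> d"
  shows "\<beta> @ [j] \<noteq> take L (top_pos n s) @ [Suc (top_pos n s ! L)]"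
proof
  assume top: "\<beta> @ [j] = take L (top_pos n s) @ [Suc (top_pos n s ! L)]"
  have "L < length x" using assms(3) nstack_pos_length[OF assms(1,2)] by auto
  note xp = take_Suc_eq_snocD[OF assms(5,4) this]
  from top have "take L x = take L (top_pos n s)" "j = Suc (top_pos n s ! L)" using xp(1) by simp_all
  with nstack_top_pos_maximal[OF assms(1-3)] xp(2) assms(6) show False by simp
qed

definition traced_children ::
    "nat list \<Rightarrow> nat \<Rightarrow> 'g stk \<Rightarrow> 'g stk \<Rightarrow> (nat list \<Rightarrow> nat list) \<Rightarrow> nat list \<Rightarrow> bool" where
  "traced_children \<beta> d s' s b \<beta>0 \<longleftrightarrow> length \<beta>0 = length \<beta> \<and> (\<forall>j rest g. j \<le> d \<longrightarrow>
      (Zst g (\<beta> @ j # rest) \<in> zeros s' \<longleftrightarrow> Zst g (\<beta>0 @ j # rest) \<in> zeros s) \<and>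
      (Zst g (\<beta> @ j # rest) \<in> zeros s' \<longrightarrow> b (\<beta> @ j # rest) = \<beta>0 @ j # rest))"

lemma traced_childrenD:
  assumes "traced_children \<beta> d s' s b \<beta>0" "j \<le> d" "Zst g (\<beta> @ j # rest) \<in> zeros s'"
  shows "b (\<beta> @ j # rest) = \<beta>0 @ j # rest" "Zst g (\<beta>0 @ j # rest) \<in> zeros s"
  using assms unfolding traced_children_def by auto

lemma traced_children_trans:
  "traced_children \<beta> d s2 s1 b1 \<beta>1 \<Longrightarrow> traced_children \<beta>1 d s1 s0 b0 \<beta>0 \<Longrightarrow>
    traced_children \<beta> d s2 s0 (b0 \<circ> b1) \<beta>0"
  unfolding traced_children_def by auto

lemma traced_children_pop:
  assumes s: "nstack n s" and k: "1 \<le> k" "k \<le> n" and lb: "length \<beta> = n - k"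
    and r: "1 \<le> r" "r \<le> n" and pop: "pop_st n r s = Some s'"
    and x0: "Zst g0 x0 \<in> zeros s'" "take (Suc (n - k)) x0 = \<beta> @ [d]"
    and not_top: "Zst g0 x0 \<notin> zeros (top_st n (k - 1) s)"
  shows "traced_children \<beta> d s' s id \<beta>"
proof -
  have zeros_s': "zeros s' = zeros s - zeros (top_st n (r - 1) s)" using zeros_pop_st[OF s r pop] .
  then have x0_s: "Zst g0 x0 \<in> zeros s" using x0(1) by blast
  have lx0: "length x0 = n" using nstack_pos_length[OF s x0_s] .
  have x0_prefix: "take (Suc (n - k)) x0 \<noteq> take (Suc (n - k)) (top_pos n s)"
    using nstack_mem_zeros_top_pred_iff[OF s k x0_s] not_top by simp
  have "Zst g (\<beta> @ j # rest) \<notin> zeros (top_st n (r - 1) s)"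
    if j: "j \<le> d" and xs: "Zst g (\<beta> @ j # rest) \<in> zeros s" for j rest g
  proof
    assume "Zst g (\<beta> @ j # rest) \<in> zeros (top_st n (r - 1) s)"
    then have top_r: "take (Suc (n - r)) (\<beta> @ j # rest) = take (Suc (n - r)) (top_pos n s)"
      using nstack_mem_zeros_top_pred_iff[OF s r xs] by simp
    show False
    proof (cases "r \<le> k")
      case True
      then have "take (Suc (n - k)) (\<beta> @ j # rest) = take (Suc (n - k)) (top_pos n s)"
        using take_eq_take_le[OF top_r] by simp
      then show False using prefix_below_not_top[OF s x0_s _ lb x0(2) x0_prefix j] lb k by simp
    next
      case False
      then have le: "Suc (n - r) \<le> n - k" using k r by simp
      have "take (n - k) x0 = \<beta>" using take_Suc_eq_snocD(1)[OF x0(2) lb] lx0 k by simp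
      then have "take (Suc (n - r)) x0 = take (Suc (n - r)) (\<beta> @ j # rest)"
        using take_eq_take_le[of "n - k" x0 "\<beta> @ j # rest", OF _ le] lb by simp
      then have "Zst g0 x0 \<in> zeros (top_st n (r - 1) s)"
        using nstack_mem_zeros_top_pred_iff[OF s r x0_s] top_r by simp
      then show False using zeros_s' x0(1) by blast
    qed
  qed
  then show ?thesis unfolding traced_children_def using zeros_s' by auto
qed

lemma mem_positions_iff: "x \<in> positions u \<longleftrightarrow> (\<exists>g. Zst g x \<in> zeros u)"
  unfolding positions_def using mem_zeros_Zst by force

lemma traced_children_push_unchanged:
  assumes s: "nstack n s" and push: "s' = push_st n r \<gamma> s" and r: "1 \<le> r" "r \<le> n"
    and fresh: "\<And>j rest g. j \<le> d \<Longrightarrow> Zst g (\<beta> @ j # rest) \<notin> zeros (top_st n (r - 1) s')"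
    and b: "\<And>x. x \<notin> positions (top_st n (r - 1) s') \<Longrightarrow> b x = x"
  shows "traced_children \<beta> d s' s b \<beta>"
  using zeros_push_st(1)[OF s r] push fresh b unfolding traced_children_def mem_positions_iff by auto

lemma take_pos_succ_eq_snocD:
  assumes "take (Suc L) (pos_succ n r y) = \<beta> @ [d]" "n - r < L" "L < length y"
  shows "\<beta> = pos_succ n r (take L y)" "take (Suc L) y = take L y @ [d]"
proof -
  have "take (Suc L) (pos_succ n r y) = pos_succ n r (take (Suc L) y)"
    unfolding pos_succ_def using assms(2) by (simp add: take_update_swap)
  also have "take (Suc L) y = take L y @ [y ! L]" using assms(3) by (simp add: take_Suc_conv_app_nth)
  also have "pos_succ n r (take L y @ [y ! L]) = pos_succ n r (take L y) @ [y ! L]"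
    using assms(2,3) by (intro pos_succ_append) simp
  finally have "\<beta> @ [d] = pos_succ n r (take L y) @ [y ! L]" using assms(1) by simp
  then show "\<beta> = pos_succ n r (take L y)" "take (Suc L) y = take L y @ [d]"
    using assms(3) by (simp_all add: take_Suc_conv_app_nth)
qed

lemma push_copy_avoids_prefix:
  assumes s: "nstack n s" and r: "1 \<le> r" "r \<le> k" and k: "k \<le> n" and lb: "length \<beta> = n - k"
    and x0: "Zst g0 x0 \<in> zeros s" "take (Suc (n - k)) x0 = \<beta> @ [d]"
    and not_top: "take (Suc (n - k)) x0 \<noteq> take (Suc (n - k)) (top_pos n s)"
    and j: "j \<le> d"
  shows "Zst g (\<beta> @ j # rest) \<notin> zeros (top_st n (r - 1) (push_st n r \<gamma> s))"
proof
  have rn: "r \<le> n" using r k by simp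
  assume "Zst g (\<beta> @ j # rest) \<in> zeros (top_st n (r - 1) (push_st n r \<gamma> s))"
  then obtain g1 y where y: "Zst g1 y \<in> zeros (top_st n (r - 1) s)" and eq: "\<beta> @ j # rest = pos_succ n r y"
    using zeros_push_st(2)[OF s r(1) rn] by blast
  have "r - 1 \<le> n" using rn by simp
  with y have ys: "Zst g1 y \<in> zeros s" using nstack_zeros_top_st_subset[OF s] by blast
  have y_top: "take (Suc (n - r)) y = take (Suc (n - r)) (top_pos n s)"
    using nstack_mem_zeros_top_pred_iff[OF s r(1) rn ys] y by simp
  have lk: "n - k < n" using r k by simp
  have prefix: "take (n - k) (pos_succ n r y) = \<beta>" "pos_succ n r y ! (n - k) = j"
    using lb eq[symmetric] by (simp_all add: nth_append)
  show False
  proof (cases "r = k")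
    case True
    have "take (n - k) (pos_succ n r y) = take (n - k) (top_pos n s)"
      using take_pos_succ[of "n - k" n r y] take_eq_take_le[OF y_top] True by simp
    moreover have "pos_succ n r y ! (n - k) = Suc (top_pos n s ! (n - k))"
    proof -
      have "n - r < length y" using nstack_pos_length[OF s ys] lk True by simp
      moreover have "y ! (n - r) = top_pos n s ! (n - r)"
        using y_top length_top_pos[OF s] by (metis lessI nth_take)
      ultimately show ?thesis using nth_pos_succ True by simp
    qed
    ultimately show False
      using prefix prefix_not_above_top[OF s x0(1) lk lb x0(2) j] by simp
  next
    case False
    then have "Suc (n - k) \<le> n - r" using r k by simp
    then have "take (Suc (n - k)) (pos_succ n r y) = take (Suc (n - k)) (top_pos n s)"
      using take_pos_succ take_eq_take_le[OF y_top] by (metis le_SucI)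
    moreover have "take (Suc (n - k)) (pos_succ n r y) = \<beta> @ [j]"
      using lb eq[symmetric] by simp
    ultimately show False using prefix_below_not_top[OF s x0(1) lk lb x0(2) not_top j] by simp
  qed
qed

lemma mem_zeros_top_pred_if_same_prefix:
  assumes s: "nstack n s" and r: "1 \<le> r" "r \<le> n"
    and x: "Zst g x \<in> zeros (top_st n (r - 1) s)" and x': "Zst g' x' \<in> zeros s"
    and prefix: "take (Suc (n - r)) x' = take (Suc (n - r)) x"
  shows "Zst g' x' \<in> zeros (top_st n (r - 1) s)"
proof -
  have "r - 1 \<le> n" using r by simp
  with x have "Zst g x \<in> zeros s" using nstack_zeros_top_st_subset[OF s] by blast
  with x prefix show ?thesis using nstack_mem_zeros_top_pred_iff[OF s r] x' by simp
qed

lemma push_copy_child_iff: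
  assumes s: "nstack n s" and push: "s' = push_st n r \<gamma> s" and r: "1 \<le> r" "r \<le> n"
    and L: "n - r < length \<beta>0"
    and y0: "Zst g1 y0 \<in> zeros (top_st n (r - 1) s)" "take (length \<beta>0) y0 = \<beta>0"
    and not_top: "\<beta>0 @ j # rest \<noteq> top_pos n s"
  shows "Zst g (pos_succ n r \<beta>0 @ j # rest) \<in> zeros (top_st n (r - 1) s') \<longleftrightarrow> Zst g (\<beta>0 @ j # rest) \<in> zeros s"
proof -
  have copy_iff: "Zst g x \<in> zeros (top_st n (r - 1) s') \<longleftrightarrow> (\<exists>g2 y. Zst g2 y \<in> zeros (top_st n (r - 1) s) \<and>
      x = pos_succ n r y \<and> g = (if y = top_pos n s then \<gamma> else g2))" for x
    using zeros_push_st(2)[OF s r] push by simp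
  have shift: "pos_succ n r (\<beta>0 @ j # rest) = pos_succ n r \<beta>0 @ j # rest" using L by (rule pos_succ_append)
  have old_sub: "zeros (top_st n (r - 1) s) \<subseteq> zeros s" using nstack_zeros_top_st_subset[OF s] r by simp
  show ?thesis
  proof
    assume "Zst g (pos_succ n r \<beta>0 @ j # rest) \<in> zeros (top_st n (r - 1) s')"
    then obtain g2 y where "Zst g2 y \<in> zeros (top_st n (r - 1) s)" "pos_succ n r (\<beta>0 @ j # rest) = pos_succ n r y"
      "g = (if y = top_pos n s then \<gamma> else g2)"
      unfolding copy_iff shift by blast
    moreover from this(2) have "y = \<beta>0 @ j # rest" by (metis pos_pred_pos_succ)
    ultimately show "Zst g (\<beta>0 @ j # rest) \<in> zeros s" using not_top old_sub by auto
  next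
    assume old: "Zst g (\<beta>0 @ j # rest) \<in> zeros s"
    have le: "Suc (n - r) \<le> length \<beta>0" using L by simp
    then have "take (Suc (n - r)) (\<beta>0 @ j # rest) = take (Suc (n - r)) (take (length \<beta>0) y0)"
      using y0(2) by simp
    also have "\<dots> = take (Suc (n - r)) y0" using le by (simp add: min_def)
    finally have "take (Suc (n - r)) (\<beta>0 @ j # rest) = take (Suc (n - r)) y0" .
    with mem_zeros_top_pred_if_same_prefix[OF s r y0(1) old]
    show "Zst g (pos_succ n r \<beta>0 @ j # rest) \<in> zeros (top_st n (r - 1) s')"
      unfolding copy_iff shift[symmetric] using not_top by auto
  qed
qed

lemma traced_children_push_copy:
  assumes s: "nstack n s" and s': "nstack n s'" and push: "s' = push_st n r \<gamma> s"
    and r: "1 \<le> r" "r \<le> n" and L: "n - r < length \<beta>" "length \<beta> < n"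
    and x0: "Zst g0 x0 \<in> zeros (top_st n (r - 1) s')" "take (Suc (length \<beta>)) x0 = \<beta> @ [d]"
    and b: "\<And>x. x \<in> positions (top_st n (r - 1) s') \<Longrightarrow> b x = pos_pred n r x"
    and not_top: "take (Suc (length \<beta>)) (b x0) \<noteq> take (Suc (length \<beta>)) (top_pos n s)"
  shows "\<exists>\<beta>0. traced_children \<beta> d s' s b \<beta>0"
proof -
  let ?L = "length \<beta>" and ?copy = "zeros (top_st n (r - 1) s')"
  have copy_sub: "?copy \<subseteq> zeros s'" using zeros_push_st(1)[OF s r] push by simp
  obtain g1 y0 where y0: "Zst g1 y0 \<in> zeros (top_st n (r - 1) s)" "x0 = pos_succ n r y0"
    using zeros_push_st(2)[OF s r] push x0(1) by blast
  have "x0 \<in> positions (top_st n (r - 1) s')" using x0(1) mem_positions_iff by blast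
  then have b_x0: "b x0 = y0" using b y0(2) by simp
  have y0_s: "Zst g1 y0 \<in> zeros s"
    using y0(1) nstack_zeros_top_st_subset[OF s le_trans[OF diff_le_self r(2)]] by blast
  define \<beta>0 where "\<beta>0 = take ?L y0"
  have ly0: "?L < length y0" using nstack_pos_length[OF s y0_s] L by simp
  then have lb0: "length \<beta>0 = ?L" unfolding \<beta>0_def by simp
  note y0_prefix = take_pos_succ_eq_snocD[OF x0(2)[unfolded y0(2)] L(1) ly0, folded \<beta>0_def]
  have not_top_pos: "\<beta>0 @ j # rest \<noteq> top_pos n s" if "j \<le> d" for j rest
  proof
    assume "\<beta>0 @ j # rest = top_pos n s"
    moreover have "take (Suc ?L) (\<beta>0 @ j # rest) = \<beta>0 @ [j]" using lb0 by simp
    ultimately have "\<beta>0 @ [j] = take (Suc ?L) (top_pos n s)" by simp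
    with prefix_below_not_top[OF s y0_s L(2) lb0 y0_prefix(2) _ that] not_top b_x0 show False by simp
  qed
  have "take (length \<beta>0) y0 = \<beta>0" using lb0 unfolding \<beta>0_def by simp
  note child_iff = push_copy_child_iff[OF s push r L(1)[folded lb0] y0(1) this not_top_pos,
      folded y0_prefix(1)]
  have in_copy: "Zst g (\<beta> @ j # rest) \<in> ?copy" if "Zst g (\<beta> @ j # rest) \<in> zeros s'" for g j rest
  proof (rule mem_zeros_top_pred_if_same_prefix[OF s' r x0(1) that])
    have "take ?L (\<beta> @ j # rest) = take ?L x0"
      using take_Suc_eq_snocD(1)[OF x0(2) refl] ly0 y0(2) by simp
    then show "take (Suc (n - r)) (\<beta> @ j # rest) = take (Suc (n - r)) x0"
      using take_eq_take_le L(1) by (metis Suc_leI)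
  qed
  have "traced_children \<beta> d s' s b \<beta>0"
    unfolding traced_children_def
  proof (intro conjI allI impI lb0)
    fix j rest g
    assume j: "j \<le> d"
    show "Zst g (\<beta> @ j # rest) \<in> zeros s' \<longleftrightarrow> Zst g (\<beta>0 @ j # rest) \<in> zeros s"
      using in_copy copy_sub child_iff[OF j] by blast
    assume "Zst g (\<beta> @ j # rest) \<in> zeros s'"
    then have "\<beta> @ j # rest \<in> positions (top_st n (r - 1) s')" using in_copy mem_positions_iff by blast
    moreover have "\<beta> @ j # rest = pos_succ n r (\<beta>0 @ j # rest)"
      unfolding y0_prefix(1) using lb0 L(1) by (simp add: pos_succ_append)
    ultimately show "b (\<beta> @ j # rest) = \<beta>0 @ j # rest" using b by simp
  qed
  then show ?thesis ..
qed

lemma traced_children_push_outside_copy: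
  assumes s: "nstack n s" and s': "nstack n s'" and push: "s' = push_st n r \<gamma> s"
    and r: "1 \<le> r" "r \<le> n" and k: "1 \<le> k" "k \<le> n" and lb: "length \<beta> = n - k"
    and x0: "Zst g0 x0 \<in> zeros s'" "take (Suc (n - k)) x0 = \<beta> @ [d]"
    and outside: "\<And>g. Zst g x0 \<notin> zeros (top_st n (r - 1) s')"
    and x0_not_top: "take (Suc (n - k)) x0 \<noteq> take (Suc (n - k)) (top_pos n s)"
    and b: "\<And>x. x \<notin> positions (top_st n (r - 1) s') \<Longrightarrow> b x = x"
  shows "traced_children \<beta> d s' s b \<beta>"
proof -
  have x0_s: "Zst g0 x0 \<in> zeros s" using zeros_push_st(1)[OF s r] push x0(1) outside by blast
  have fresh: "Zst g (\<beta> @ j # rest) \<notin> zeros (top_st n (r - 1) s')" if j: "j \<le> d" for j rest g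
  proof (cases "r \<le> k")
    case True
    then show ?thesis
      using push_copy_avoids_prefix[OF s r(1) True k(2) lb x0_s x0(2) x0_not_top j] push by simp
  next
    case False
    show ?thesis
    proof
      assume copy: "Zst g (\<beta> @ j # rest) \<in> zeros (top_st n (r - 1) s')"
      have "take (n - k) x0 = take (n - k) (\<beta> @ j # rest)"
        using take_Suc_eq_snocD(1)[OF x0(2) lb] nstack_pos_length[OF s' x0(1)] lb k by simp
      moreover have "Suc (n - r) \<le> n - k" using False k r by simp
      ultimately have "take (Suc (n - r)) x0 = take (Suc (n - r)) (\<beta> @ j # rest)"
        by (rule take_eq_take_le)
      then show False using mem_zeros_top_pred_if_same_prefix[OF s' r copy x0(1)] outside by blast
    qed
  qed
  show ?thesis using traced_children_push_unchanged[OF s push r fresh b] .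
qed

lemma traced_children_push:
  assumes s: "nstack n s" and s': "nstack n s'" and push: "s' = push_st n r \<gamma> s"
    and r: "1 \<le> r" "r \<le> n" and k: "1 \<le> k" "k \<le> n" and lb: "length \<beta> = n - k"
    and x0: "Zst g0 x0 \<in> zeros s'" "take (Suc (n - k)) x0 = \<beta> @ [d]"
    and b: "b = (\<lambda>x. if x \<in> positions (top_st n (r - 1) s') then pos_pred n r x else x)"
    and not_top: "\<And>g. Zst g (b x0) \<notin> zeros (top_st n (k - 1) s)"
  shows "\<exists>\<beta>0. traced_children \<beta> d s' s b \<beta>0"
proof (cases "\<exists>g. Zst g x0 \<in> zeros (top_st n (r - 1) s')")
  case True
  then obtain g g1 y0 where copy: "Zst g x0 \<in> zeros (top_st n (r - 1) s')"
    and y0: "Zst g1 y0 \<in> zeros (top_st n (r - 1) s)" "x0 = pos_succ n r y0"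
    using zeros_push_st(2)[OF s r] push by blast
  have "x0 \<in> positions (top_st n (r - 1) s')" using True mem_positions_iff by blast
  then have b_x0: "b x0 = y0" using b y0(2) by simp
  have y0_s: "Zst g1 y0 \<in> zeros s"
    using y0(1) nstack_zeros_top_st_subset[OF s le_trans[OF diff_le_self r(2)]] by blast
  have y0_top: "take (Suc (n - r)) y0 = take (Suc (n - r)) (top_pos n s)"
    using nstack_mem_zeros_top_pred_iff[OF s r y0_s] y0(1) by simp
  have y0_not_top: "take (Suc (n - k)) y0 \<noteq> take (Suc (n - k)) (top_pos n s)"
    using nstack_mem_zeros_top_pred_iff[OF s k y0_s] not_top[of g1] b_x0 by simp
  txt \<open>A copy made inside the topmost \<open>(k-1)\<close>-stack would be traced back into it.\<close>
  have "n - r < length \<beta>"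
  proof (rule ccontr)
    assume "\<not> n - r < length \<beta>"
    then have "Suc (n - k) \<le> Suc (n - r)" using lb by simp
    with y0_top y0_not_top show False using take_eq_take_le by blast
  qed
  moreover have "length \<beta> < n" using lb k by simp
  ultimately show ?thesis
    using traced_children_push_copy[OF s s' push r _ _ copy] x0(2) b y0_not_top b_x0 lb by simp
next
  case False
  then have "x0 \<notin> positions (top_st n (r - 1) s')" using mem_positions_iff by blast
  then have "b x0 = x0" using b by simp
  moreover have "Zst g0 x0 \<in> zeros s" using zeros_push_st(1)[OF s r] push x0(1) False by blast
  ultimately have "take (Suc (n - k)) x0 \<noteq> take (Suc (n - k)) (top_pos n s)"
    using nstack_mem_zeros_top_pred_iff[OF s k] not_top[of g0] by simp
  with traced_children_push_outside_copy[OF s s' push r k lb x0] False b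
  have "traced_children \<beta> d s' s b \<beta>" by simp
  then show ?thesis ..
qed

lemma traced_children_step:
  assumes dpda: "dpda n \<delta>" and step: "step n \<delta> c c'"
    and s: "nstack n (snd c)" and s': "nstack n (snd c')"
    and k: "1 \<le> k" "k \<le> n" and lb: "length \<beta> = n - k"
    and x0: "Zst g0 x0 \<in> zeros (snd c')" "take (Suc (n - k)) x0 = \<beta> @ [d]"
    and not_top: "\<And>g. Zst g (back_pos n \<delta> c c' x0) \<notin> zeros (top_st n (k - 1) (snd c))"
  shows "\<exists>\<beta>0. traced_children \<beta> d (snd c') (snd c) (back_pos n \<delta> c c') \<beta>0"
proof (cases "\<delta> (fst c) (top_sym n (snd c))")
  case (Read f)
  then have "snd c' = snd c" and "back_pos n \<delta> c c' = id"
    using step unfolding step_def back_pos_def by (auto simp: fun_eq_iff)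
  then have "traced_children \<beta> d (snd c') (snd c) (back_pos n \<delta> c c') \<beta>"
    unfolding traced_children_def by simp
  then show ?thesis ..
next
  case (Op p op)
  note op_ok = dpda[unfolded dpda_def, rule_format, of "fst c" "top_sym n (snd c)", unfolded Op]
  show ?thesis
  proof (cases op)
    case (Pop r)
    have r: "1 \<le> r" "r \<le> n" using op_ok Pop by auto
    have "pop_st n r (snd c) = Some (snd c')" and "back_pos n \<delta> c c' = id"
      using step Op Pop unfolding step_def back_pos_def by (auto simp: fun_eq_iff)
    with traced_children_pop[OF s k lb r _ x0] not_top show ?thesis by auto
  next
    case (Push r \<gamma>)
    have r: "1 \<le> r" "r \<le> n" using op_ok Push by auto
    have push: "snd c' = push_st n r \<gamma> (snd c)"
      and back_eq: "back_pos n \<delta> c c' =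
        (\<lambda>x. if x \<in> positions (top_st n (r - 1) (snd c')) then pos_pred n r x else x)"
      using step Op Push unfolding step_def back_pos_def pos_pred_def by (auto simp: fun_eq_iff)
    show ?thesis by (rule traced_children_push[OF s s' push r k lb x0 back_eq not_top])
  qed
qed


section \<open>Tracing children along a run\<close>

lemma is_run_nstack: "is_run n \<delta> R \<Longrightarrow> nstack n (snd (hd R)) \<and> nstack n (snd (last R))"
  unfolding is_run_def by simp

lemma is_run_snocD:
  assumes run: "is_run n \<delta> (R @ [c])" and ne: "R \<noteq> []"
  shows "is_run n \<delta> R" "step n \<delta> (last R) c" "nstack n (snd c)"
proof -
  have steps: "\<And>i. Suc i < length (R @ [c]) \<Longrightarrow> step n \<delta> ((R @ [c]) ! i) ((R @ [c]) ! Suc i)"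
    using run unfolding is_run_def by blast
  have "step n \<delta> (R ! i) (R ! Suc i)" if "Suc i < length R" for i
    using steps[of i] that by (simp add: nth_append)
  with run ne show "is_run n \<delta> R" unfolding is_run_def by simp
  obtain m where m: "length R = Suc m" using ne by (cases R) auto
  with steps[of m] ne show "step n \<delta> (last R) c" by (simp add: nth_append last_conv_nth)
  show "nstack n (snd c)" using run unfolding is_run_def by simp
qed

lemma hpos_append: "i < length R \<Longrightarrow> hpos n \<delta> (R @ S) i x = hpos n \<delta> R i x"
  by (induction i arbitrary: x) (simp_all add: nth_append)

lemma hpos_snoc:
  assumes "R \<noteq> []"
  shows "hpos n \<delta> (R @ [c]) (length R) x = hpos n \<delta> R (length R - 1) (back_pos n \<delta> (last R) c x)"
proof -
  obtain m where m: "length R = Suc m" using assms by (cases R) auto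
  then have "hpos n \<delta> (R @ [c]) (Suc m) x = hpos n \<delta> (R @ [c]) m (back_pos n \<delta> (R ! m) c x)"
    by (simp add: nth_append)
  with m assms show ?thesis by (simp add: hpos_append last_conv_nth)
qed

text \<open>Non-upperness of the proper suffixes of a return provides, at each intermediate
  configuration, a 0-stack below the \<open>d\<close>-th child of the traced node whose history has left the
  topmost \<open>(k-1)\<close>-stack; this is what prevents intermediate steps from touching the children
  \<open>1, \<dots>, d\<close>.\<close>

definition escaping_node ::
    "nat \<Rightarrow> ('q \<Rightarrow> 'g \<Rightarrow> ('q, 'a, 'g) trans) \<Rightarrow> nat \<Rightarrow> ('q, 'g) config list \<Rightarrow> nat list \<Rightarrow> nat \<Rightarrow> bool" where
  "escaping_node n \<delta> k R \<beta> d \<longleftrightarrow> (\<forall>i < length R - 1. \<exists>g x. Zst g x \<in> zeros (snd (last R)) \<and>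
     take (Suc (n - k)) x = \<beta> @ [d] \<and>
     (\<forall>g'. Zst g' (hpos n \<delta> (drop i R) (length R - 1 - i) x) \<notin> zeros (top_st n (k - 1) (snd (R ! i)))))"

lemma escaping_node_last_step:
  assumes esc: "escaping_node n \<delta> k (R @ [c]) \<beta> d" and ne: "R \<noteq> []"
  obtains g x0 where "Zst g x0 \<in> zeros (snd c)" "take (Suc (n - k)) x0 = \<beta> @ [d]"
    "\<And>g'. Zst g' (back_pos n \<delta> (last R) c x0) \<notin> zeros (top_st n (k - 1) (snd (last R)))"
proof -
  have last_step: "length R - 1 < length (R @ [c]) - 1" "drop (length R - 1) (R @ [c]) = [last R, c]"
      "length (R @ [c]) - 1 - (length R - 1) = 1" "(R @ [c]) ! (length R - 1) = last R"
    using ne by (cases R rule: rev_exhaust; simp add: nth_append)+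
  from esc[unfolded escaping_node_def, rule_format, OF last_step(1)] that show thesis
    unfolding last_step(2-4) by auto
qed

lemma escaping_node_butlast:
  assumes esc: "escaping_node n \<delta> k (R @ [c]) \<beta> d" and ne: "R \<noteq> []"
    and c: "nstack n (snd c)" and k: "1 \<le> k" "k \<le> n" and lb: "length \<beta> = n - k"
    and step: "traced_children \<beta> d (snd c) (snd (last R)) (back_pos n \<delta> (last R) c) \<beta>1"
  shows "escaping_node n \<delta> k R \<beta>1 d"
  unfolding escaping_node_def
proof (intro allI impI)
  fix i
  assume i: "i < length R - 1"
  then have i_R: "i < length R" by linarith
  then have i': "i < length (R @ [c]) - 1" "(R @ [c]) ! i = R ! i" by (simp_all add: nth_append)
  obtain g x where x: "Zst g x \<in> zeros (snd c)" "take (Suc (n - k)) x = \<beta> @ [d]"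
    "\<forall>g'. Zst g' (hpos n \<delta> (drop i R @ [c]) (length R - i) x) \<notin> zeros (top_st n (k - 1) (snd (R ! i)))"
    using esc[unfolded escaping_node_def, rule_format, OF i'(1)] i_R unfolding i'(2) by auto
  let ?x1 = "\<beta>1 @ d # drop (Suc (n - k)) x"
  have "length x = n" using nstack_pos_length[OF c x(1)] .
  then have "x = \<beta> @ d # drop (Suc (n - k)) x" using take_Suc_eq_snocD(3)[OF x(2) lb] k by simp
  with traced_childrenD[OF step order_refl, of g "drop (Suc (n - k)) x"] x(1)
  have x1: "Zst g ?x1 \<in> zeros (snd (last R))" "back_pos n \<delta> (last R) c x = ?x1" by simp_all
  have "drop i R \<noteq> []" "last (drop i R) = last R" "length (drop i R) = length R - i" using i by auto
  then have "hpos n \<delta> (drop i R @ [c]) (length R - i) x = hpos n \<delta> (drop i R) (length R - 1 - i) ?x1"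
    using hpos_snoc[of "drop i R" n \<delta> c x] x1(2) by simp
  moreover have "length \<beta>1 = n - k" using step lb unfolding traced_children_def by simp
  ultimately show "\<exists>g x. Zst g x \<in> zeros (snd (last R)) \<and> take (Suc (n - k)) x = \<beta>1 @ [d] \<and>
      (\<forall>g'. Zst g' (hpos n \<delta> (drop i R) (length R - 1 - i) x) \<notin> zeros (top_st n (k - 1) (snd (R ! i))))"
    using x(3) x1(1) by (intro exI[of _ g] exI[of _ ?x1]) simp
qed

lemma hpos_snoc_comp:
  assumes "R \<noteq> []"
  shows "hpos n \<delta> (R @ [c]) (length (R @ [c]) - 1) = hpos n \<delta> R (length R - 1) \<circ> back_pos n \<delta> (last R) c"
proof
  fix x
  show "hpos n \<delta> (R @ [c]) (length (R @ [c]) - 1) x = (hpos n \<delta> R (length R - 1) \<circ> back_pos n \<delta> (last R) c) x"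
    unfolding comp_apply length_append_singleton diff_Suc_1 by (rule hpos_snoc[OF assms])
qed

lemma run_traced_children:
  assumes dpda: "dpda n \<delta>" and k: "1 \<le> k" "k \<le> n"
  shows "is_run n \<delta> R \<Longrightarrow> length \<beta> = n - k \<Longrightarrow> escaping_node n \<delta> k R \<beta> d \<Longrightarrow>
    \<exists>\<beta>0. traced_children \<beta> d (snd (last R)) (snd (hd R)) (hpos n \<delta> R (length R - 1)) \<beta>0"
proof (induction R arbitrary: \<beta> rule: rev_induct)
  case Nil
  then show ?case unfolding is_run_def by simp
next
  case (snoc c R)
  show ?case
  proof (cases "R = []")
    case True
    then have "traced_children \<beta> d (snd (last (R @ [c]))) (snd (hd (R @ [c])))
        (hpos n \<delta> (R @ [c]) (length (R @ [c]) - 1)) \<beta>"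
      unfolding traced_children_def by simp
    then show ?thesis ..
  next
    case False
    note run = is_run_snocD[OF snoc.prems(1) False]
    have s: "nstack n (snd (last R))" using is_run_nstack[OF run(1)] by simp
    obtain g x0 where x0: "Zst g x0 \<in> zeros (snd c)" "take (Suc (n - k)) x0 = \<beta> @ [d]"
      "\<And>g'. Zst g' (back_pos n \<delta> (last R) c x0) \<notin> zeros (top_st n (k - 1) (snd (last R)))"
      using escaping_node_last_step[OF snoc.prems(3) False] by blast
    obtain \<beta>1 where step: "traced_children \<beta> d (snd c) (snd (last R)) (back_pos n \<delta> (last R) c) \<beta>1"
      using traced_children_step[OF dpda run(2) s run(3) k snoc.prems(2) x0] by blast
    have "length \<beta>1 = n - k" using step snoc.prems(2) unfolding traced_children_def by simp
    with escaping_node_butlast[OF snoc.prems(3) False run(3) k snoc.prems(2) step] snoc.IH[OF run(1)]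
    obtain \<beta>0 where "traced_children \<beta>1 d (snd (last R)) (snd (hd R)) (hpos n \<delta> R (length R - 1)) \<beta>0"
      by blast
    with step have "traced_children \<beta> d (snd c) (snd (hd R))
        (hpos n \<delta> R (length R - 1) \<circ> back_pos n \<delta> (last R) c) \<beta>0"
      by (rule traced_children_trans)
    then have "traced_children \<beta> d (snd c) (snd (hd R)) (hpos n \<delta> (R @ [c]) (length (R @ [c]) - 1)) \<beta>0"
      unfolding hpos_snoc_comp[OF False] .
    then have "traced_children \<beta> d (snd (last (R @ [c]))) (snd (hd (R @ [c])))
        (hpos n \<delta> (R @ [c]) (length (R @ [c]) - 1)) \<beta>0"
      using False by simp
    then show ?thesis ..
  qed
qed


section \<open>Leaves, paths and position-free equality\<close>

lemma wfst_Lst_child_iff: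
  assumes "wfst n (Suc m) q (Lst ss)"
  shows "Zst g (q @ Suc j # rest) \<in> zeros (Lst ss) \<longleftrightarrow>
    j < length ss \<and> Zst g (q @ Suc j # rest) \<in> zeros (ss ! j)"
proof
  assume "Zst g (q @ Suc j # rest) \<in> zeros (Lst ss)"
  then obtain i where i: "i < length ss" "Zst g (q @ Suc j # rest) \<in> zeros (ss ! i)"
    unfolding Zst_mem_zeros_Lst_iff by blast
  moreover from wfst_child_pos(3)[OF assms i] have "i = j" by simp
  ultimately show "j < length ss \<and> Zst g (q @ Suc j # rest) \<in> zeros (ss ! j)" by simp
next
  assume "j < length ss \<and> Zst g (q @ Suc j # rest) \<in> zeros (ss ! j)"
  then show "Zst g (q @ Suc j # rest) \<in> zeros (Lst ss)" unfolding Zst_mem_zeros_Lst_iff by blast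
qed

lemma wfst_top_pos_last_child:
  assumes "wfst n (Suc j) q (Lst ss)" "ss \<noteq> []"
  shows "zpos (top_st (Suc j) 0 (Lst ss)) ! length q = length ss"
proof -
  obtain g t where t: "top_st j 0 (last ss) = Zst g t" "Zst g t \<in> zeros (last ss)"
    using top_st_0_mem_zeros wfst_Lst_last[OF assms] by blast
  have idx: "length ss - 1 < length ss" using assms(2) by simp
  have "Zst g t \<in> zeros (ss ! (length ss - 1))" using t(2) assms(2) by (simp add: last_conv_nth)
  from wfst_child_pos(3)[OF assms(1) idx this] have "t ! length q = length ss" using assms(2) by simp
  with t(1) show ?thesis by simp
qed

lemma at_path_wfst:
  "wfst n j q s \<Longrightarrow> at_path s p = Some (Zst g x) \<Longrightarrow> x = q @ map Suc p \<and> Zst g x \<in> zeros s"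
proof (induction j arbitrary: q s p)
  case 0
  then obtain g' where "s = Zst g' q" using wfst_0D by blast
  with 0 show ?case by (cases p) auto
next
  case (Suc j)
  then obtain ss where s: "s = Lst ss" using wfst_SucD by blast
  show ?case
  proof (cases p)
    case Nil
    then show ?thesis using Suc.prems s by simp
  next
    case (Cons i p')
    then have i: "i < length ss" "at_path (ss ! i) p' = Some (Zst g x)"
      using Suc.prems s by (auto split: if_splits)
    have "wfst n j (q @ [Suc i]) (ss ! i)" using Suc.prems(1) s i by simp
    from Suc.IH[OF this i(2)] have "x = q @ Suc i # map Suc p'" "Zst g x \<in> zeros (ss ! i)" by auto
    then show ?thesis using Cons s i(1) Zst_mem_zeros_Lst_iff by auto
  qed
qed

lemma at_path_of_mem_zeros:
  "wfst n j q s \<Longrightarrow> Zst g (q @ map Suc p) \<in> zeros s \<Longrightarrow> at_path s p = Some (Zst g (q @ map Suc p))"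
proof (induction j arbitrary: q s p)
  case 0
  then show ?case by (auto dest: wfst_0D)
next
  case (Suc j)
  then obtain ss where s: "s = Lst ss" using wfst_SucD by blast
  from Suc.prems(2) have "length (q @ map Suc p) = length q + Suc j"
    using wfst_zeros_pos[OF Suc.prems(1)] by blast
  then obtain i p' where p: "p = i # p'" by (cases p) auto
  with Suc.prems s have i: "i < length ss" "Zst g ((q @ [Suc i]) @ map Suc p') \<in> zeros (ss ! i)"
    using wfst_Lst_child_iff[of n j q ss g i "map Suc p'"] by auto
  have "wfst n j (q @ [Suc i]) (ss ! i)" using Suc.prems(1) s i(1) by simp
  from Suc.IH[OF this i(2)] show ?case using s p i(1) by simp
qed

lemma wfst_at_path_Zst_iff:
  assumes "wfst n j q s"
  shows "(\<exists>x. at_path s p = Some (Zst g x)) \<longleftrightarrow> Zst g (q @ map Suc p) \<in> zeros s"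
proof
  assume "\<exists>x. at_path s p = Some (Zst g x)"
  then obtain x where x: "at_path s p = Some (Zst g x)" ..
  have "x = q @ map Suc p" and "Zst g x \<in> zeros s" using at_path_wfst[OF assms x] by blast+
  then show "Zst g (q @ map Suc p) \<in> zeros s" by simp
qed (use at_path_of_mem_zeros[OF assms] in blast)

lemma wfst_at_path_leaf_exists: "wfst n j q s \<Longrightarrow> s \<noteq> Lst [] \<Longrightarrow> \<exists>p g x. at_path s p = Some (Zst g x)"
proof (induction j arbitrary: q s)
  case 0
  then obtain g where "at_path s [] = Some (Zst g q)" using wfst_0D by fastforce
  then show ?case by blast
next
  case (Suc j)
  then obtain ss where s: "s = Lst ss" "ss \<noteq> []" using wfst_SucD by blast
  with Suc.prems(1) have "wfst n j (q @ [Suc 0]) (ss ! 0)" "ss ! 0 \<noteq> Lst []" by auto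
  from Suc.IH[OF this] obtain p g x where "at_path (ss ! 0) p = Some (Zst g x)" by blast
  then have "at_path s (0 # p) = Some (Zst g x)" using s by simp
  then show ?case by blast
qed

lemma posdown_eq_if_same_leaves:
  "wfst n j q A \<Longrightarrow> wfst n j q' B \<Longrightarrow>
    (\<And>p g. (\<exists>x. at_path A p = Some (Zst g x)) \<longleftrightarrow> (\<exists>x. at_path B p = Some (Zst g x))) \<Longrightarrow>
    posdown A = posdown B"
proof (induction j arbitrary: q q' A B)
  case 0
  then obtain g1 g2 where A: "A = Zst g1 q" and B: "B = Zst g2 q'" using wfst_0D by metis
  then have "\<exists>x. at_path A [] = Some (Zst g1 x)" by simp
  with "0.prems"(3) have "\<exists>x. at_path B [] = Some (Zst g1 x)" by blast
  then show ?case using A B by simp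
next
  case (Suc j)
  obtain as bs where ab: "A = Lst as" "B = Lst bs" using Suc.prems(1,2) wfst_SucD by metis
  have A_child: "wfst n j (q @ [Suc i]) (as ! i) \<and> as ! i \<noteq> Lst []" if "i < length as" for i
    using Suc.prems(1) ab that by simp
  have B_child: "wfst n j (q' @ [Suc i]) (bs ! i) \<and> bs ! i \<noteq> Lst []" if "i < length bs" for i
    using Suc.prems(2) ab that by simp
  have same_child_leaves: "(\<exists>x. at_path (as ! i) p = Some (Zst g x)) \<longleftrightarrow> (\<exists>x. at_path (bs ! i) p = Some (Zst g x))"
    if "i < length as" "i < length bs" for i p g
    using Suc.prems(3)[of "i # p" g] ab that by simp
  have len: "length as = length bs"
  proof (rule ccontr)
    assume "length as \<noteq> length bs"
    then consider "length as < length bs" | "length bs < length as" by linarith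
    then show False
    proof cases
      case 1
      then obtain p g x where "at_path (bs ! length as) p = Some (Zst g x)"
        using wfst_at_path_leaf_exists B_child by blast
      with ab 1 have "\<exists>x. at_path B (length as # p) = Some (Zst g x)" by simp
      then have "\<exists>x. at_path A (length as # p) = Some (Zst g x)" using Suc.prems(3) by blast
      then show False using ab by simp
    next
      case 2
      then obtain p g x where "at_path (as ! length bs) p = Some (Zst g x)"
        using wfst_at_path_leaf_exists A_child by blast
      with ab 2 have "\<exists>x. at_path A (length bs # p) = Some (Zst g x)" by simp
      then have "\<exists>x. at_path B (length bs # p) = Some (Zst g x)" using Suc.prems(3) by blast
      then show False using ab by simp
    qed
  qed
  have "posdown (as ! i) = posdown (bs ! i)" if i: "i < length as" for i
  proof (rule Suc.IH)
    show "wfst n j (q @ [Suc i]) (as ! i)" using A_child i by blast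
    show "wfst n j (q' @ [Suc i]) (bs ! i)" using B_child i len by simp
    show "(\<exists>x. at_path (as ! i) p = Some (Zst g x)) \<longleftrightarrow> (\<exists>x. at_path (bs ! i) p = Some (Zst g x))" for p g
      using same_child_leaves i len by simp
  qed
  then have "map posdown as = map posdown bs" using len by (intro nth_equalityI) auto
  then show ?case using ab by simp
qed


section \<open>Returns\<close>

lemma nstack_top_Lst:
  assumes s: "nstack n s" and k: "1 \<le> k" "k \<le> n" and top: "top_st n k s = Lst ss"
  shows "wfst n k (take (n - k) (top_pos n s)) (Lst ss)" "ss \<noteq> []" "top_pos n s ! (n - k) = length ss"
proof -
  obtain k' where k': "k = Suc k'" using k by (cases k) auto
  from nstack_top_st[OF s k(2)] top
  show wf: "wfst n k (take (n - k) (top_pos n s)) (Lst ss)" and ne: "ss \<noteq> []" by auto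
  have "top_st k 0 (Lst ss) = top_st n 0 s" using top_st_top_st[of 0 k n s] top k by simp
  with wfst_top_pos_last_child[OF wf[unfolded k'] ne] length_top_pos[OF s] k
  show "top_pos n s ! (n - k) = length ss" unfolding top_pos_def k' by simp
qed

lemma nstack_top_child_iff:
  assumes s: "nstack n s" and k: "1 \<le> k" "k \<le> n" and top: "top_st n k s = Lst ss"
  shows "Zst g (take (n - k) (top_pos n s) @ Suc j # rest) \<in> zeros (Lst ss) \<longleftrightarrow>
    Zst g (take (n - k) (top_pos n s) @ Suc j # rest) \<in> zeros s \<and> j < length ss"
proof -
  obtain k' where k': "k = Suc k'" using k by (cases k) auto
  let ?x = "take (n - k) (top_pos n s) @ Suc j # rest"
  have len: "length (take (n - k) (top_pos n s)) = n - k" using length_top_pos[OF s] by simp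
  have "Zst g ?x \<in> zeros (top_st n k s)" if "Zst g ?x \<in> zeros s"
    using nstack_mem_zeros_top_st_iff[OF s k(2) that] len by simp
  then have "Zst g ?x \<in> zeros s \<Longrightarrow> Zst g ?x \<in> zeros (Lst ss)" unfolding top .
  moreover have "Zst g ?x \<in> zeros (Lst ss) \<Longrightarrow> Zst g ?x \<in> zeros s"
    using nstack_zeros_top_st_subset[OF s k(2)] unfolding top by blast
  moreover have "wfst n (Suc k') (take (n - k) (top_pos n s)) (Lst ss)"
    using nstack_top_Lst(1)[OF s k top] k' by simp
  then have "Zst g ?x \<in> zeros (Lst ss) \<Longrightarrow> j < length ss"
    using wfst_Lst_child_iff[of n k' _ ss g j rest] by blast
  ultimately show ?thesis by blast
qed

lemma popped_children_correspond:
  assumes s0: "nstack n s0" and sN: "nstack n sN" and k: "1 \<le> k" "k \<le> n"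
    and ts: "top_st n k s0 = Lst ts" and topN: "top_pos n sN ! (n - k) = length ts - 1"
    and \<alpha>: "\<alpha> = take (n - k) (top_pos n s0)" and \<beta>: "\<beta> = take (n - k) (top_pos n sN)"
    and traced: "traced_children \<beta> (length ts - 1) sN s0 b \<alpha>"
  shows "Zst g (\<beta> @ map Suc p) \<in> zeros (top_st n k sN) \<longleftrightarrow> Zst g (\<alpha> @ map Suc p) \<in> zeros (Lst (butlast ts))"
    and "Zst g (\<beta> @ map Suc p) \<in> zeros (top_st n k sN) \<Longrightarrow> b (\<beta> @ map Suc p) = \<alpha> @ map Suc p"
proof -
  obtain k' where k': "k = Suc k'" using k by (cases k) auto
  obtain ks where ks: "top_st n k sN = Lst ks" using nstack_top_st[OF sN k(2)] wfst_SucD k' by blast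
  have len_ks: "length ks = length ts - 1" using nstack_top_Lst(3)[OF sN k ks] topN by simp
  have wf_ts: "wfst n (Suc k') \<alpha> (Lst ts)" using nstack_top_Lst(1)[OF s0 k ts] \<alpha> k' by simp
  then have wf_pop: "wfst n (Suc k') \<alpha> (Lst (butlast ts))" by (simp add: nth_butlast)
  have "length \<beta> = n - k" "length \<alpha> = n - k" using \<alpha> \<beta> length_top_pos[OF s0] length_top_pos[OF sN] by auto
  moreover have "zeros (Lst (butlast ts)) \<subseteq> zeros s0"
    using nstack_zeros_top_st_subset[OF s0 k(2)] ts by (auto dest: in_set_butlastD)
  ultimately have no_root: "Zst g \<beta> \<notin> zeros (top_st n k sN)" "Zst g \<alpha> \<notin> zeros (Lst (butlast ts))"
    using nstack_pos_length[OF sN, of g \<beta>] nstack_pos_length[OF s0, of g \<alpha>]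
      nstack_zeros_top_st_subset[OF sN k(2)] k by auto
  have child: "Zst g (\<beta> @ Suc j # rest) \<in> zeros (top_st n k sN) \<longleftrightarrow>
      Zst g (\<alpha> @ Suc j # rest) \<in> zeros (Lst (butlast ts))"
    "Zst g (\<beta> @ Suc j # rest) \<in> zeros (top_st n k sN) \<Longrightarrow> b (\<beta> @ Suc j # rest) = \<alpha> @ Suc j # rest"
    for j rest
  proof -
    have pop: "Zst g (\<alpha> @ Suc j # rest) \<in> zeros (Lst (butlast ts)) \<longleftrightarrow>
        Zst g (\<alpha> @ Suc j # rest) \<in> zeros (Lst ts) \<and> j < length ts - 1"
      using wfst_Lst_child_iff[OF wf_pop] wfst_Lst_child_iff[OF wf_ts] by (auto simp: nth_butlast)
    note top_sN = nstack_top_child_iff[OF sN k ks, folded \<beta>, of g j rest]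
      and top_s0 = nstack_top_child_iff[OF s0 k ts, folded \<alpha>, of g j rest]
      and traced_j = traced[unfolded traced_children_def, THEN conjunct2, rule_format, where j = "Suc j" and rest = rest and g = g]
    show "Zst g (\<beta> @ Suc j # rest) \<in> zeros (top_st n k sN) \<longleftrightarrow>
        Zst g (\<alpha> @ Suc j # rest) \<in> zeros (Lst (butlast ts))"
      unfolding ks pop using top_sN top_s0 traced_j len_ks by auto
    show "Zst g (\<beta> @ Suc j # rest) \<in> zeros (top_st n k sN) \<Longrightarrow> b (\<beta> @ Suc j # rest) = \<alpha> @ Suc j # rest"
      unfolding ks using top_sN traced_j len_ks by auto
  qed
  show "Zst g (\<beta> @ map Suc p) \<in> zeros (top_st n k sN) \<longleftrightarrow> Zst g (\<alpha> @ map Suc p) \<in> zeros (Lst (butlast ts))"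
    using no_root child(1) by (cases p) auto
  show "Zst g (\<beta> @ map Suc p) \<in> zeros (top_st n k sN) \<Longrightarrow> b (\<beta> @ map Suc p) = \<alpha> @ map Suc p"
    using no_root child(2) by (cases p) auto
qed

lemma popped_top_matches:
  assumes s0: "nstack n s0" and sN: "nstack n sN" and k: "1 \<le> k" "k \<le> n"
    and ts: "top_st n k s0 = Lst ts" and topN: "top_pos n sN ! (n - k) = length ts - 1"
    and traced: "traced_children (take (n - k) (top_pos n sN)) (length ts - 1) sN s0 b
      (take (n - k) (top_pos n s0))"
  shows "posdown (Lst (butlast ts)) = posdown (top_st n k sN)"
    and "at_path (top_st n k sN) p = Some (Zst g x) \<Longrightarrow>
      at_path (Lst (butlast ts)) p = Some (Zst g (b x)) \<and> Zst g (b x) \<in> zeros s0"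
proof -
  define \<alpha> \<beta> where "\<alpha> = take (n - k) (top_pos n s0)" and "\<beta> = take (n - k) (top_pos n sN)"
  note corr = popped_children_correspond[OF s0 sN k ts topN \<alpha>_def \<beta>_def traced[folded \<alpha>_def \<beta>_def]]
  obtain k' where k': "k = Suc k'" using k by (cases k) auto
  have wf_pop: "wfst n k \<alpha> (Lst (butlast ts))"
    using nstack_top_Lst(1)[OF s0 k ts] k' unfolding \<alpha>_def by (simp add: nth_butlast)
  have wf_top: "wfst n k \<beta> (top_st n k sN)" using nstack_top_st[OF sN k(2)] unfolding \<beta>_def by blast
  show "posdown (Lst (butlast ts)) = posdown (top_st n k sN)"
    by (rule posdown_eq_if_same_leaves[OF wf_pop wf_top])
      (simp only: wfst_at_path_Zst_iff[OF wf_pop] wfst_at_path_Zst_iff[OF wf_top] corr(1))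
  assume "at_path (top_st n k sN) p = Some (Zst g x)"
  from at_path_wfst[OF wf_top this] have x: "x = \<beta> @ map Suc p" "Zst g x \<in> zeros (top_st n k sN)" by auto
  then have pop: "Zst g (\<alpha> @ map Suc p) \<in> zeros (Lst (butlast ts))" and b_x: "b x = \<alpha> @ map Suc p"
    using corr by auto
  have "zeros (Lst (butlast ts)) \<subseteq> zeros s0"
    using nstack_zeros_top_st_subset[OF s0 k(2)] ts by (auto dest: in_set_butlastD)
  with pop b_x at_path_of_mem_zeros[OF wf_pop pop]
  show "at_path (Lst (butlast ts)) p = Some (Zst g (b x)) \<and> Zst g (b x) \<in> zeros s0" by auto
qed

lemma traced_top_node_is_popped:
  assumes s0: "nstack n s0" and sN: "nstack n sN" and k: "1 \<le> k" "k \<le> n"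
    and ts: "top_st n k s0 = Lst ts" "2 \<le> length ts"
    and traced: "traced_children (take (n - k) (top_pos n sN)) (top_pos n sN ! (n - k)) sN s0 b \<beta>0"
    and lands: "\<And>g. Zst g (top_pos n sN) \<in> zeros sN \<Longrightarrow>
      Zst g (b (top_pos n sN)) \<in> zeros (top_st n (k - 1) (upd_top n k (\<lambda>_. Lst (butlast ts)) s0))"
  shows "\<beta>0 = take (n - k) (top_pos n s0)" "top_pos n sN ! (n - k) = length ts - 1"
proof -
  define tN d rest where "tN = top_pos n sN" and "d = tN ! (n - k)" and "rest = drop (Suc (n - k)) tN"
  have tN: "tN = take (n - k) tN @ d # rest"
    using top_pos_split[OF sN] k unfolding tN_def d_def rest_def by simp
  obtain gt where gt: "Zst gt tN \<in> zeros sN" using nstack_top_pos[OF sN] unfolding tN_def by blast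
  have lb0: "length \<beta>0 = n - k"
    using traced length_top_pos[OF sN] k unfolding traced_children_def by simp
  have b_tN: "b tN = \<beta>0 @ d # rest"
    using traced_childrenD(1)[OF traced[folded tN_def d_def], of d gt rest] gt tN d_def by simp
  obtain m where m: "length ts = Suc (Suc m)" using ts(2) by (metis add_2_eq_Suc le_Suc_ex)
  have "top_st n k (upd_top n k (\<lambda>_. Lst (butlast ts)) s0) = Lst (butlast ts)"
    using top_st_upd_top[of n n "[]" s0 k] s0 k(2) unfolding nstack_def by simp
  then have "top_st n (k - 1) (upd_top n k (\<lambda>_. Lst (butlast ts)) s0) = last (butlast ts)"
    by (rule top_st_pred[OF k])
  also have "\<dots> = butlast ts ! (length (butlast ts) - 1)"
    using m by (intro last_conv_nth) (auto simp flip: length_0_conv)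
  also have "\<dots> = butlast ts ! m" using m by simp
  also have "\<dots> = ts ! m" using m by (simp add: nth_butlast)
  finally have "top_st n (k - 1) (upd_top n k (\<lambda>_. Lst (butlast ts)) s0) = ts ! m" .
  with lands[of gt] gt b_tN have mem: "Zst gt (\<beta>0 @ d # rest) \<in> zeros (ts ! m)"
    unfolding tN_def by simp
  obtain k' where k': "k = Suc k'" using k by (cases k) auto
  have "wfst n (Suc k') (take (n - k) (top_pos n s0)) (Lst ts)" using nstack_top_Lst(1)[OF s0 k ts(1)] k' by simp
  from wfst_child_pos(2)[OF this _ mem] m length_top_pos[OF s0] k
  have "take (Suc (n - k)) (\<beta>0 @ d # rest) = take (n - k) (top_pos n s0) @ [Suc m]" by simp
  with lb0 m show "\<beta>0 = take (n - k) (top_pos n s0)" "top_pos n sN ! (n - k) = length ts - 1"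
    unfolding tN_def[symmetric] d_def[symmetric] by auto
qed

lemma hist_eqI:
  assumes "nstack n (snd (hd R))" "Zst g y \<in> zeros (snd (hd R))" "hpos n \<delta> R (length R - 1) (zpos z) = y"
  shows "hist n \<delta> R z = Zst g y"
  unfolding hist_def
proof (rule the_equality)
  show "Zst g y \<in> zeros (snd (hd R)) \<and> zpos (Zst g y) = hpos n \<delta> R (length R - 1) (zpos z)"
    using assms(2,3) by simp
  fix t
  assume t: "t \<in> zeros (snd (hd R)) \<and> zpos t = hpos n \<delta> R (length R - 1) (zpos z)"
  then obtain g' where "t = Zst g' y" using assms(3) mem_zeros_Zst by fastforce
  with t nstack_zeros_unique[OF assms(1,2)] show "t = Zst g y" by auto
qed

lemma not_upper_witness:
  assumes run: "is_run n \<delta> R" and k: "1 \<le> k" "k \<le> n" and i: "i < length R - 1"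
    and not_upper: "\<not> upper n \<delta> (drop i R) (k - 1)"
  shows "\<exists>g x. Zst g x \<in> zeros (snd (last R)) \<and>
    take (Suc (n - k)) x = take (Suc (n - k)) (top_pos n (snd (last R))) \<and>
    (\<forall>g'. Zst g' (hpos n \<delta> (drop i R) (length R - 1 - i) x) \<notin> zeros (top_st n (k - 1) (snd (R ! i))))"
proof -
  have drop: "last (drop i R) = last R" "hd (drop i R) = R ! i" "length (drop i R) - 1 = length R - 1 - i"
    using i by (auto simp: hd_drop_conv_nth)
  have sN: "nstack n (snd (last R))" and si: "nstack n (snd (R ! i))"
    using run i unfolding is_run_def by auto
  have k1: "k - 1 \<le> n" using k by simp
  from not_upper obtain z where z: "z \<in> zeros (top_st n (k - 1) (snd (last R)))"
    and escapes: "hist n \<delta> (drop i R) z \<notin> zeros (top_st n (k - 1) (snd (R ! i)))"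
    unfolding upper_def drop by blast
  then obtain g x where zx: "z = Zst g x" using mem_zeros_Zst by blast
  with z have x: "Zst g x \<in> zeros (snd (last R))" using nstack_zeros_top_st_subset[OF sN k1] by blast
  have "Zst g' (hpos n \<delta> (drop i R) (length R - 1 - i) x) \<notin> zeros (top_st n (k - 1) (snd (R ! i)))" for g'
  proof
    assume top: "Zst g' (hpos n \<delta> (drop i R) (length R - 1 - i) x) \<in> zeros (top_st n (k - 1) (snd (R ! i)))"
    then have "Zst g' (hpos n \<delta> (drop i R) (length R - 1 - i) x) \<in> zeros (snd (hd (drop i R)))"
      using nstack_zeros_top_st_subset[OF si k1] drop by auto
    then have "hist n \<delta> (drop i R) z = Zst g' (hpos n \<delta> (drop i R) (length R - 1 - i) x)"
      by (intro hist_eqI) (use si drop zx in simp_all)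
    with escapes top show False by simp
  qed
  with x z zx show ?thesis using nstack_mem_zeros_top_pred_iff[OF sN k x] by blast
qed

lemma return_traced_children:
  assumes dpda: "dpda n \<delta>" and k: "1 \<le> k" "k \<le> n" and run: "is_run n \<delta> R" and ret: "is_return n \<delta> k R"
  obtains ts where "top_st n k (snd (hd R)) = Lst ts" "2 \<le> length ts"
    "top_pos n (snd (last R)) ! (n - k) = length ts - 1"
    "traced_children (take (n - k) (top_pos n (snd (last R)))) (length ts - 1) (snd (last R)) (snd (hd R))
       (hpos n \<delta> R (length R - 1)) (take (n - k) (top_pos n (snd (hd R))))"
proof -
  define s0 sN tN where "s0 = snd (hd R)" and "sN = snd (last R)" and "tN = top_pos n sN"
  have s0: "nstack n s0" and sN: "nstack n sN" using is_run_nstack[OF run] unfolding s0_def sN_def by auto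
  obtain P0 where pop: "pop_st n k s0 = Some P0"
    and lands: "\<forall>z\<in>zeros (top_st n (k - 1) sN). hist n \<delta> R z \<in> zeros (top_st n (k - 1) P0)"
    and not_upper: "\<forall>i < length R - 1. \<not> upper n \<delta> (drop i R) (k - 1)"
    using ret unfolding is_return_def s0_def sN_def by blast
  obtain ts where ts: "top_st n k s0 = Lst ts" "2 \<le> length ts"
    and P0: "P0 = upd_top n k (\<lambda>_. Lst (butlast ts)) s0"
    using pop unfolding pop_st_def by (auto split: stk.splits if_splits)
  have len: "length (take (n - k) tN) = n - k"
    and prefix: "take (Suc (n - k)) tN = take (n - k) tN @ [tN ! (n - k)]"
    using length_top_pos[OF sN] k unfolding tN_def by (auto simp: take_Suc_conv_app_nth)
  have "escaping_node n \<delta> k R (take (n - k) tN) (tN ! (n - k))"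
    using not_upper_witness[OF run k] not_upper prefix unfolding escaping_node_def sN_def tN_def by metis
  then obtain \<beta>0 where traced: "traced_children (take (n - k) tN) (tN ! (n - k)) sN s0 (hpos n \<delta> R (length R - 1)) \<beta>0"
    using run_traced_children[OF dpda k run len] unfolding s0_def sN_def by blast
  have "Zst g (hpos n \<delta> R (length R - 1) tN) \<in> zeros (top_st n (k - 1) P0)" if "Zst g tN \<in> zeros sN" for g
  proof -
    have "Zst g tN \<in> zeros (top_st n (k - 1) sN)"
      using nstack_mem_zeros_top_pred_iff[OF sN k that] unfolding tN_def by simp
    with lands have "hist n \<delta> R (Zst g tN) \<in> zeros (top_st n (k - 1) P0)" by blast
    moreover have "Zst g (hpos n \<delta> R (length R - 1) tN) \<in> zeros s0"
      using traced_childrenD[OF traced, of "tN ! (n - k)" g "drop (Suc (n - k)) tN"] that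
        top_pos_split[OF sN, of "n - k"] k unfolding tN_def by simp
    ultimately show ?thesis using hist_eqI[of n R g _ \<delta> "Zst g tN"] s0 unfolding s0_def by simp
  qed
  from traced_top_node_is_popped[OF s0 sN k ts traced[unfolded tN_def] this[unfolded tN_def P0]]
  show thesis using that ts traced unfolding s0_def sN_def tN_def by simp
qed

lemma pop_st_self: "1 \<le> k \<Longrightarrow> 2 \<le> length ts \<Longrightarrow> pop_st k k (Lst ts) = Some (Lst (butlast ts))"
  unfolding pop_st_def by (cases k) auto

theorem mainTheorem8:
  fixes \<delta> :: "'q::finite \<Rightarrow> 'g::finite \<Rightarrow> ('q, 'a::finite, 'g) trans"
    and n k :: nat and R :: "('q, 'g) config list"
  assumes "dpda n \<delta>" and "1 \<le> k" and "k \<le> n"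
    and "is_run n \<delta> R" and "is_return n \<delta> k R"
  shows "\<exists>P. pop_st k k (top_st n k (snd (hd R))) = Some P \<and>
           posdown P = posdown (top_st n k (snd (last R))) \<and>
           (\<forall>p g x. at_path (top_st n k (snd (last R))) p = Some (Zst g x) \<longrightarrow>
                     at_path P p = Some (hist n \<delta> R (Zst g x)))"
proof -
  have s0: "nstack n (snd (hd R))" and sN: "nstack n (snd (last R))" using is_run_nstack[OF assms(4)] by auto
  obtain ts where ts: "top_st n k (snd (hd R)) = Lst ts" "2 \<le> length ts"
    and topN: "top_pos n (snd (last R)) ! (n - k) = length ts - 1"
    and traced: "traced_children (take (n - k) (top_pos n (snd (last R)))) (length ts - 1) (snd (last R))
      (snd (hd R)) (hpos n \<delta> R (length R - 1)) (take (n - k) (top_pos n (snd (hd R))))"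
    using return_traced_children[OF assms] by blast
  note matches = popped_top_matches[OF s0 sN assms(2,3) ts(1) topN traced]
  have "at_path (Lst (butlast ts)) p = Some (hist n \<delta> R (Zst g x))"
    if "at_path (top_st n k (snd (last R))) p = Some (Zst g x)" for p g x
  proof -
    from matches(2)[OF that] have at: "at_path (Lst (butlast ts)) p = Some (Zst g (hpos n \<delta> R (length R - 1) x))"
      and mem: "Zst g (hpos n \<delta> R (length R - 1) x) \<in> zeros (snd (hd R))" by auto
    from hist_eqI[OF s0 mem, of \<delta> "Zst g x"] at show ?thesis by simp
  qed
  with matches(1) pop_st_self[OF assms(2) ts(2)] ts(1) show ?thesis by auto
qed

end
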